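(* Let $Z_1,\dots,Z_n$ be i.i.d. with distribution $Q$ on a measurable space $\mathcal Z$ and $\psi:\mathcal Z\to\mathbb R^d$ measurable with $\int\|\psi\|^2dQ<\infty$. Let $m_n\to\infty$ and, for each $n$, let $T_{n1},\dots,T_{nn}$ be $m_n$-dimensional random vectors (defined on the same probability space as the $Z_j$). Let $T_n^*=\max_{1\le j\le n}\|T_{nj}\|$, $\bar T_n=\frac1n\sum_{j=1}^nT_{nj}$, $\mathbb S_n=\frac1n\sum_{j=1}^nT_{nj}T_{nj}^\top$, and $A_n=\frac1n\sum_{j=1}^nE\big(\psi(Z_j)T_{nj}^\top\big)$. Assume: (A1) $T_n^*=o_p(m_n^{-3/2}n^{1/2})$; (A2) $\|\bar T_n\|=O_p(m_n^{1/2}n^{-1/2})$; (A3) there is a regular sequence of $m_n\times m_n$ dispersion matrices $W_n$ with $|\mathbb S_n-W_n|_o=o_p(m_n^{-1})$; (B1) $\frac1n\sum_{j=1}^n\big(\psi(Z_j)T_{nj}^\top-E[\psi(Z_j)T_{nj}^\top]\big)=o_p(m_n^{-1/2})$; (B2) there is a measurable $\chi:\mathcal Z\to\mathbb R^d$ with $\int\chi\,dQ=0$, $\int\|\chi\|^2dQ<\infty$ and $\frac1n\sum_{i=1}^n\big(A_nW_n^{-1}T_{ni}-\chi(Z_i)\big)=o_p(n^{-1/2})$. Then, on an event whose probability tends to one, there exists a unique $\zeta_n\in\mathbb R^{m_n}$ with $$1+\zeta_n^\top T_{nj}>0\ (j=1,\dots,n),\qquad \frac1n\sum_{j=1}^n\frac{T_{nj}}{1+\zeta_n^\top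 T_{nj}}=0,$$ and $$\theta_n:=\frac1n\sum_{j=1}^n\frac{\psi(Z_j)}{1+\zeta_n^\top T_{nj}}=\bar\psi-\bar\chi+o_p(n^{-1/2}),$$ where $\bar\psi=\frac1n\sum_j\psi(Z_j)$ and $\bar\chi=\frac1n\sum_j\chi(Z_j)$.
   Context: A sequence of $m_n\times m_n$ dispersion matrices $W_n$ is called regular if $0<\inf_n\inf_{\|a\|=1}a^\top W_na\le\sup_n\sup_{\|a\|=1}a^\top W_na<\infty$. $|A|_o$ denotes the spectral (operator) norm of a matrix. *)

theory Defs
  imports "HOL-Probability.Probability"
begin

text \<open>Vectors of varying dimension m are represented as functions nat \<Rightarrow> real,
  of which only the components k < m are relevant; matrices as nat \<Rightarrow> nat \<Rightarrow> real
  (entries i,j < m relevant).  A d \<times> m matrix (d fixed) is represented by its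
  columns, nat \<Rightarrow> 'b with 'b a Euclidean space of dimension d.\<close>

definition extvec :: "nat \<Rightarrow> (nat \<Rightarrow> real) set" where
  "extvec m = {v. \<forall>k\<ge>m. v k = 0}"

definition vnorm :: "nat \<Rightarrow> (nat \<Rightarrow> real) \<Rightarrow> real" where
  "vnorm m v = sqrt (\<Sum>k<m. (v k)\<^sup>2)"

definition vdot :: "nat \<Rightarrow> (nat \<Rightarrow> real) \<Rightarrow> (nat \<Rightarrow> real) \<Rightarrow> real" where
  "vdot m u v = (\<Sum>k<m. u k * v k)"

definition mv :: "nat \<Rightarrow> (nat \<Rightarrow> nat \<Rightarrow> real) \<Rightarrow> (nat \<Rightarrow> real) \<Rightarrow> (nat \<Rightarrow> real)" where
  "mv m A v = (\<lambda>i. if i < m then (\<Sum>k<m. A i k * v k) else 0)"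

definition opnorm :: "nat \<Rightarrow> (nat \<Rightarrow> nat \<Rightarrow> real) \<Rightarrow> real" where
  "opnorm m A = Sup {vnorm m (mv m A x) | x. vnorm m x \<le> 1}"

definition minv :: "nat \<Rightarrow> (nat \<Rightarrow> nat \<Rightarrow> real) \<Rightarrow> (nat \<Rightarrow> nat \<Rightarrow> real)" where
  "minv m A = (SOME B. \<forall>i<m. \<forall>j<m. (\<Sum>k<m. A i k * B k j) = (if i = j then 1 else 0))"

definition regular_disp :: "(nat \<Rightarrow> nat) \<Rightarrow> (nat \<Rightarrow> nat \<Rightarrow> nat \<Rightarrow> real) \<Rightarrow> bool" where
  "regular_disp m W \<longleftrightarrow>
     (\<forall>n. \<forall>i<m n. \<forall>j<m n. W n i j = W n j i) \<and>
     (\<exists>c C. 0 < c \<and> (\<forall>n a. vnorm (m n) a = 1 \<longrightarrow>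
        c \<le> (\<Sum>i<m n. \<Sum>j<m n. a i * W n i j * a j) \<and>
        (\<Sum>i<m n. \<Sum>j<m n. a i * W n i j * a j) \<le> C))"

text \<open>Stochastic order symbols, stated with outer probability (for measurable
  random variables this is the usual notion).\<close>
definition o_p :: "'a measure \<Rightarrow> (nat \<Rightarrow> 'a \<Rightarrow> 'c::real_normed_vector) \<Rightarrow> (nat \<Rightarrow> real) \<Rightarrow> bool" where
  "o_p M X r \<longleftrightarrow> (\<forall>\<epsilon>>0. \<forall>\<delta>>0. eventually (\<lambda>n. \<exists>A\<in>sets M. measure M A \<le> \<delta> \<and>
      {\<omega>\<in>space M. norm (X n \<omega>) > \<epsilon> * r n} \<subseteq> A) sequentially)"

definition O_p :: "'a measure \<Rightarrow> (nat \<Rightarrow> 'a \<Rightarrow> 'c::real_normed_vector) \<Rightarrow> (nat \<Rightarrow> real) \<Rightarrow> bool" where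
  "O_p M X r \<longleftrightarrow> (\<forall>\<delta>>0. \<exists>K. eventually (\<lambda>n. \<exists>A\<in>sets M. measure M A \<le> \<delta> \<and>
      {\<omega>\<in>space M. norm (X n \<omega>) > K * r n} \<subseteq> A) sequentially)"

definition el_root :: "nat \<Rightarrow> nat \<Rightarrow> (nat \<Rightarrow> nat \<Rightarrow> real) \<Rightarrow> (nat \<Rightarrow> real) \<Rightarrow> bool" where
  "el_root m n Tj zeta \<longleftrightarrow> zeta \<in> extvec m \<and>
     (\<forall>j<n. 1 + vdot m zeta (Tj j) > 0) \<and>
     (\<forall>k<m. (\<Sum>j<n. Tj j k / (1 + vdot m zeta (Tj j))) = 0)"

end

(*
  On the event that |S_n - W| <= c/2 and |Tbar_n| T*_n <= c/13, where c is the lower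
  regularity constant of W, the function zeta |-> - sum_j ln (1 + zeta' T_nj) has a
  minimiser inside the ball of radius 1/(2 T*_n); it solves the EL equations, is unique
  because S_n is positive definite, and testing the equations against zeta itself gives
  |zeta| <= 3 |Tbar_n| / c.  By (A1)-(A3) this event has probability tending to one.
  On it, 1/(1+u) = 1 - u + u^2/(1+u) and zeta = W^-1 Tbar_n + w with
  c |w| <= |S_n - W| |zeta| + 2 T*_n zeta' S_n zeta bound theta_n - psibar + chibar
  deterministically by the quantities in (B1) and (B2) plus a multiple of
  rms(|psi(Z_j)|) (|S_n - W| |Tbar_n| + T*_n |Tbar_n|^2); all of these are o_p(n^-1/2)
  by (A1)-(A3) and a Markov bound on the sample mean of |psi|^2.
*)

theory Submission
  imports Defs "Jordan_Normal_Form.Determinant"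
begin

section \<open>Vectors and matrices of varying dimension\<close>

lemma vnorm_eq_L2_set: "vnorm m v = L2_set v {..<m}"
  by (simp add: vnorm_def L2_set_def)

lemma vnorm_nonneg [simp]: "0 \<le> vnorm m v"
  by (simp add: vnorm_eq_L2_set)

lemma abs_vdot_le: "\<bar>vdot m u v\<bar> \<le> vnorm m u * vnorm m v"
proof -
  have "\<bar>vdot m u v\<bar> \<le> (\<Sum>k<m. \<bar>u k\<bar> * \<bar>v k\<bar>)"
    unfolding vdot_def using sum_abs[of "\<lambda>k. u k * v k" "{..<m}"] by (simp add: abs_mult)
  also have "\<dots> \<le> vnorm m u * vnorm m v"
    unfolding vnorm_eq_L2_set by (rule L2_set_mult_ineq)
  finally show ?thesis .
qed

lemma vdot_le: "vdot m u v \<le> vnorm m u * vnorm m v"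
  using abs_vdot_le[of m u v] by linarith

lemma vnorm_add_le: "vnorm m (\<lambda>k. u k + v k) \<le> vnorm m u + vnorm m v"
  unfolding vnorm_eq_L2_set by (rule L2_set_triangle_ineq)

lemma vnorm_mult: "vnorm m (\<lambda>k. a * v k) = \<bar>a\<bar> * vnorm m v"
  unfolding vnorm_def
  by (simp add: power_mult_distrib real_sqrt_mult sum_nonneg flip: sum_distrib_left)

lemma vnorm_divide: "vnorm m (\<lambda>k. v k / a) = vnorm m v / \<bar>a\<bar>"
  by (simp add: vnorm_def power_divide real_sqrt_divide flip: sum_divide_distrib)

lemma vnorm_eq_0D: "vnorm m v = 0 \<Longrightarrow> k < m \<Longrightarrow> v k = 0"
  unfolding vnorm_eq_L2_set by (simp add: L2_set_eq_0_iff)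

lemma abs_le_vnorm: "k < m \<Longrightarrow> \<bar>v k\<bar> \<le> vnorm m v"
proof -
  assume "k < m"
  then have "(v k)\<^sup>2 \<le> (\<Sum>i<m. (v i)\<^sup>2)" by (intro member_le_sum) auto
  then have "sqrt ((v k)\<^sup>2) \<le> sqrt (\<Sum>i<m. (v i)\<^sup>2)" by (rule real_sqrt_le_mono)
  then show ?thesis by (simp add: vnorm_def)
qed

lemma vdot_cong:
  "(\<And>k. k < m \<Longrightarrow> u k = u' k) \<Longrightarrow> (\<And>k. k < m \<Longrightarrow> v k = v' k) \<Longrightarrow> vdot m u v = vdot m u' v'"
  unfolding vdot_def by simp

definition unit_vec :: "nat \<Rightarrow> nat \<Rightarrow> real" where
  "unit_vec k = (\<lambda>i. if i = k then 1 else 0)"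

lemma vnorm_unit_vec: "k < m \<Longrightarrow> vnorm m (unit_vec k) = 1"
proof -
  assume "k < m"
  moreover have "(\<Sum>i<m. (unit_vec k i)\<^sup>2) = (\<Sum>i<m. if i = k then 1 else 0)"
    by (rule sum.cong) (auto simp: unit_vec_def)
  ultimately show ?thesis by (simp add: vnorm_def)
qed

lemma vdot_add_unit_vec:
  "k < m \<Longrightarrow> vdot m (\<lambda>i. x i + t * unit_vec k i) v = vdot m x v + t * v k"
proof -
  assume "k < m"
  moreover have "(\<Sum>i<m. t * unit_vec k i * v i) = (\<Sum>i<m. if i = k then t * v k else 0)"
    by (rule sum.cong) (auto simp: unit_vec_def)
  ultimately show ?thesis by (simp add: vdot_def distrib_right sum.distrib)
qed

lemma continuous_on_vdot [continuous_intros]: "continuous_on S (\<lambda>x. vdot m x v)"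
  unfolding vdot_def
  by (intro continuous_intros continuous_on_subset[OF continuous_on_product_coordinates]) auto

lemma continuous_on_vnorm: "continuous_on S (\<lambda>x. vnorm m x)"
  unfolding vnorm_def
  by (intro continuous_intros continuous_on_subset[OF continuous_on_product_coordinates]) auto

definition qform :: "nat \<Rightarrow> (nat \<Rightarrow> nat \<Rightarrow> real) \<Rightarrow> (nat \<Rightarrow> real) \<Rightarrow> real" where
  "qform m A a = vdot m a (mv m A a)"

lemma qform_eq_sum: "qform m A a = (\<Sum>i<m. \<Sum>j<m. a i * A i j * a j)"
  unfolding qform_def vdot_def mv_def
  by (auto simp: sum_distrib_left mult.assoc intro!: sum.cong)

lemma qform_diff: "qform m (\<lambda>k l. A k l - B k l) a = qform m A a - qform m B a"
  by (simp add: qform_eq_sum left_diff_distrib right_diff_distrib sum_subtractf)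

lemma qform_divide: "qform m A (\<lambda>k. a k / s) = qform m A a / s\<^sup>2"
  by (simp add: qform_eq_sum sum_divide_distrib power2_eq_square)

lemma qform_eq_0: "vnorm m a = 0 \<Longrightarrow> qform m A a = 0"
  using vnorm_eq_0D[of m a] by (simp add: qform_eq_sum)

lemma vnorm_mv_le_frobenius:
  "vnorm m (mv m A x) \<le> sqrt (\<Sum>i<m. (L2_set (A i) {..<m})\<^sup>2) * vnorm m x"
proof -
  have row: "\<bar>mv m A x i\<bar> \<le> L2_set (A i) {..<m} * vnorm m x" if "i < m" for i
    using that abs_vdot_le[of m "A i" x] by (simp add: mv_def vdot_def vnorm_eq_L2_set)
  have "(mv m A x i)\<^sup>2 \<le> (L2_set (A i) {..<m})\<^sup>2 * (vnorm m x)\<^sup>2" if "i < m" for i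
    using power_mono[OF row[OF that], of 2] by (simp add: power_mult_distrib)
  then have "(\<Sum>i<m. (mv m A x i)\<^sup>2) \<le> (\<Sum>i<m. (L2_set (A i) {..<m})\<^sup>2) * (vnorm m x)\<^sup>2"
    unfolding sum_distrib_right by (intro sum_mono) simp
  then have "sqrt (\<Sum>i<m. (mv m A x i)\<^sup>2) \<le> sqrt ((\<Sum>i<m. (L2_set (A i) {..<m})\<^sup>2) * (vnorm m x)\<^sup>2)"
    by (rule real_sqrt_le_mono)
  then show ?thesis by (simp add: vnorm_def real_sqrt_mult sum_nonneg)
qed

lemma vnorm_mv_le_opnorm: "vnorm m (mv m A x) \<le> opnorm m A * vnorm m x"
proof (cases "vnorm m x = 0")
  case True
  then have "vnorm m (mv m A x) = 0"
    using vnorm_eq_0D[OF True] by (simp add: vnorm_def mv_def)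
  then show ?thesis using True by simp
next
  case False
  then have pos: "vnorm m x > 0" using vnorm_nonneg[of m x] by linarith
  define S where "S = {vnorm m (mv m A x) | x. vnorm m x \<le> 1}"
  have "bdd_above S"
  proof (rule bdd_aboveI)
    fix y assume "y \<in> S"
    then obtain x where y: "y = vnorm m (mv m A x)" "vnorm m x \<le> 1" by (auto simp: S_def)
    show "y \<le> sqrt (\<Sum>i<m. (L2_set (A i) {..<m})\<^sup>2)"
      using vnorm_mv_le_frobenius[of m A x] mult_left_mono[OF y(2), of "sqrt (\<Sum>i<m. (L2_set (A i) {..<m})\<^sup>2)"]
      unfolding y(1) by (simp add: sum_nonneg)
  qed
  moreover have "vnorm m (mv m A (\<lambda>k. x k / vnorm m x)) \<in> S"
    using pos by (auto simp: S_def vnorm_divide)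
  ultimately have "vnorm m (mv m A (\<lambda>k. x k / vnorm m x)) \<le> opnorm m A"
    unfolding opnorm_def S_def[symmetric] by (simp add: cSup_upper)
  moreover have "mv m A (\<lambda>k. x k / vnorm m x) = (\<lambda>i. mv m A x i / vnorm m x)"
    by (auto simp: mv_def sum_divide_distrib fun_eq_iff)
  ultimately show ?thesis using pos by (simp add: vnorm_divide divide_le_eq mult.commute)
qed

lemma opnorm_nonneg: "0 \<le> opnorm m A"
proof (cases "m = 0")
  case True
  then have "{vnorm m (mv m A x) | x. vnorm m x \<le> 1} = {0}" by (auto simp: vnorm_def)
  then show ?thesis by (simp add: opnorm_def)
next
  case False
  then show ?thesis
    using vnorm_mv_le_opnorm[of m A "unit_vec 0"] vnorm_nonneg[of m "mv m A (unit_vec 0)"]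
    by (simp add: vnorm_unit_vec del: vnorm_nonneg)
qed

lemma abs_qform_le_opnorm: "\<bar>qform m A a\<bar> \<le> opnorm m A * (vnorm m a)\<^sup>2"
proof -
  have "\<bar>qform m A a\<bar> \<le> vnorm m a * vnorm m (mv m A a)"
    unfolding qform_def by (rule abs_vdot_le)
  also have "\<dots> \<le> vnorm m a * (opnorm m A * vnorm m a)"
    by (intro mult_left_mono vnorm_mv_le_opnorm) simp
  finally show ?thesis by (simp add: power2_eq_square algebra_simps)
qed

lemma qform_bounds_of_unit_bounds:
  assumes "\<And>a. vnorm m a = 1 \<Longrightarrow> c \<le> qform m W a \<and> qform m W a \<le> C"
  shows "c * (vnorm m a)\<^sup>2 \<le> qform m W a \<and> qform m W a \<le> C * (vnorm m a)\<^sup>2"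
proof (cases "vnorm m a = 0")
  case True
  then show ?thesis by (simp add: qform_eq_0)
next
  case False
  then have pos: "vnorm m a > 0" using vnorm_nonneg[of m a] by linarith
  then have "c \<le> qform m W a / (vnorm m a)\<^sup>2 \<and> qform m W a / (vnorm m a)\<^sup>2 \<le> C"
    using assms[of "\<lambda>k. a k / vnorm m a"] by (simp add: vnorm_divide qform_divide)
  then show ?thesis using pos by (simp add: field_simps)
qed

lemma regular_dispE:
  assumes "regular_disp m W"
  obtains c C where "0 < c" "c \<le> C"
    "\<And>n a. c * (vnorm (m n) a)\<^sup>2 \<le> qform (m n) (W n) a"
    "\<And>n a. qform (m n) (W n) a \<le> C * (vnorm (m n) a)\<^sup>2"
proof -
  obtain c C where c: "0 < c" and unit: "\<And>n a. vnorm (m n) a = 1 \<Longrightarrow>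
      c \<le> qform (m n) (W n) a \<and> qform (m n) (W n) a \<le> max C c"
    using assms unfolding regular_disp_def qform_eq_sum by (meson max.coboundedI1)
  show thesis
    using that[OF c max.cobounded2] qform_bounds_of_unit_bounds[OF unit] by blast
qed

lemma qform_ge_perturb:
  assumes "\<And>a. c * (vnorm m a)\<^sup>2 \<le> qform m W a" and "opnorm m (\<lambda>k l. S k l - W k l) \<le> e"
  shows "(c - e) * (vnorm m a)\<^sup>2 \<le> qform m S a"
  using assms(1)[of a] abs_qform_le_opnorm[of m "\<lambda>k l. S k l - W k l" a]
    mult_right_mono[OF assms(2), of "(vnorm m a)\<^sup>2"]
  by (simp add: qform_diff left_diff_distrib abs_le_iff)

lemma qform_le_perturb:
  assumes "\<And>a. qform m W a \<le> C * (vnorm m a)\<^sup>2" and "opnorm m (\<lambda>k l. S k l - W k l) \<le> e"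
  shows "qform m S a \<le> (C + e) * (vnorm m a)\<^sup>2"
  using assms(1)[of a] abs_qform_le_opnorm[of m "\<lambda>k l. S k l - W k l" a]
    mult_right_mono[OF assms(2), of "(vnorm m a)\<^sup>2"]
  by (simp add: qform_diff distrib_right abs_le_iff)

lemma mult_self_le_cancel:
  fixes x b :: real
  assumes "0 \<le> x" "0 \<le> b" "x * (c * x) \<le> x * b"
  shows "c * x \<le> b"
proof (cases "x = 0")
  case False
  then have "0 < x" using assms(1) by linarith
  then show ?thesis using assms(3) by (simp add: mult_le_cancel_left_pos)
qed (use assms(2) in simp)

lemma det_ne_0_of_pos_def:
  assumes c: "c > 0" and pd: "\<And>a. c * (vnorm m a)\<^sup>2 \<le> qform m W a"
  shows "det (mat m m (\<lambda>(i, j). W i j)) \<noteq> 0"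
proof
  define A :: "real mat" where "A = mat m m (\<lambda>(i, j). W i j)"
  assume "det (mat m m (\<lambda>(i, j). W i j)) = 0"
  then obtain v where v: "v \<in> carrier_vec m" "v \<noteq> 0\<^sub>v m" "A *\<^sub>v v = 0\<^sub>v m"
    using det_0_iff_vec_prod_zero[of A m] by (auto simp: A_def)
  define a where "a = (\<lambda>k. if k < m then v $ k else 0)"
  have "mv m W a i = 0" for i
  proof (cases "i < m")
    case True
    have "(A *\<^sub>v v) $ i = 0" using v(3) True by simp
    then have "(\<Sum>k<m. W i k * v $ k) = 0" using True v(1)
      by (simp add: A_def scalar_prod_def lessThan_atLeast0)
    then show ?thesis using True by (simp add: mv_def a_def)
  qed (simp add: mv_def)
  then have "qform m W a = 0" by (simp add: qform_def vdot_def)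
  then have "c * (vnorm m a)\<^sup>2 \<le> 0" using pd[of a] by simp
  then have "vnorm m a = 0" using c by (simp add: mult_le_0_iff)
  then have "v $ k = 0" if "k < m" for k using vnorm_eq_0D[of m a k] that by (simp add: a_def)
  then have "v = 0\<^sub>v m" using v(1) by (intro eq_vecI) auto
  with v(2) show False by simp
qed

lemma minv_right_inverse:
  assumes c: "c > 0" and pd: "\<And>a. c * (vnorm m a)\<^sup>2 \<le> qform m W a"
  shows "\<forall>i<m. \<forall>j<m. (\<Sum>k<m. W i k * minv m W k j) = (if i = j then 1 else 0)"
proof -
  define A :: "real mat" where "A = mat m m (\<lambda>(i, j). W i j)"
  have Ac: "A \<in> carrier_mat m m" by (simp add: A_def)
  have "det A \<noteq> 0" unfolding A_def by (rule det_ne_0_of_pos_def[OF c pd])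
  then have "A \<in> Units (ring_mat TYPE(real) m ())" by (rule det_non_zero_imp_unit[OF Ac])
  then obtain B where "B \<in> carrier (ring_mat TYPE(real) m ())"
      "A \<otimes>\<^bsub>ring_mat TYPE(real) m ()\<^esub> B = \<one>\<^bsub>ring_mat TYPE(real) m ()\<^esub>"
    unfolding Units_def by blast
  then have B: "B \<in> carrier_mat m m" "A * B = 1\<^sub>m m" by (simp_all add: ring_mat_def)
  have "\<forall>i<m. \<forall>j<m. (\<Sum>k<m. W i k * B $$ (k, j)) = (if i = j then 1 else 0)"
  proof (intro allI impI)
    fix i j assume ij: "i < m" "j < m"
    have "(A * B) $$ (i, j) = 1\<^sub>m m $$ (i, j)" by (simp only: B(2))
    also have "\<dots> = (if i = j then 1 else 0)" using ij by simp
    finally have e1: "(A * B) $$ (i, j) = (if i = j then 1 else 0)" .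
    have "(A * B) $$ (i, j) = row A i \<bullet> col B j" using ij B(1) Ac by simp
    also have "\<dots> = (\<Sum>k<m. W i k * B $$ (k, j))"
      using ij B(1) by (simp add: A_def scalar_prod_def lessThan_atLeast0)
    finally show "(\<Sum>k<m. W i k * B $$ (k, j)) = (if i = j then 1 else 0)" using e1 by simp
  qed
  then have "\<exists>B. \<forall>i<m. \<forall>j<m. (\<Sum>k<m. W i k * B k j) = (if i = j then 1 else 0)"
    by (intro exI[of _ "\<lambda>k j. B $$ (k, j)"])
  then show ?thesis unfolding minv_def by (rule someI_ex)
qed

lemma mv_mv_right_inverse:
  assumes "\<forall>i<m. \<forall>j<m. (\<Sum>k<m. W i k * B k j) = (if i = j then 1 else 0)" "i < m"
  shows "mv m W (mv m B x) i = x i"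
proof -
  have "mv m W (mv m B x) i = (\<Sum>k<m. \<Sum>l<m. W i k * B k l * x l)"
    using assms(2) by (simp add: mv_def sum_distrib_left mult.assoc)
  also have "\<dots> = (\<Sum>l<m. (\<Sum>k<m. W i k * B k l) * x l)"
    by (subst sum.swap) (simp add: sum_distrib_right)
  also have "\<dots> = (\<Sum>l<m. if i = l then x l else 0)"
    using assms by (intro sum.cong) auto
  also have "\<dots> = x i" using assms(2) by simp
  finally show ?thesis .
qed

lemma vnorm_mv_minv_le:
  assumes c: "c > 0" and pd: "\<And>a. c * (vnorm m a)\<^sup>2 \<le> qform m W a"
  shows "vnorm m (mv m (minv m W) x) \<le> vnorm m x / c"
proof -
  define v where "v = mv m (minv m W) x"
  have "c * (vnorm m v)\<^sup>2 \<le> qform m W v" by (rule pd)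
  also have "\<dots> = vdot m v x"
    unfolding qform_def v_def
    by (rule vdot_cong) (auto simp: mv_mv_right_inverse[OF minv_right_inverse[OF c pd]])
  also have "\<dots> \<le> vnorm m v * vnorm m x" by (rule vdot_le)
  finally have "vnorm m v * (c * vnorm m v) \<le> vnorm m v * vnorm m x"
    by (simp add: power2_eq_square mult_ac)
  then have "c * vnorm m v \<le> vnorm m x" by (rule mult_self_le_cancel[rotated 2]) simp_all
  then show ?thesis using c by (simp add: v_def field_simps)
qed

section \<open>Sample statistics\<close>

definition Smat :: "nat \<Rightarrow> (nat \<Rightarrow> nat \<Rightarrow> real) \<Rightarrow> nat \<Rightarrow> nat \<Rightarrow> real" where
  "Smat n Tj = (\<lambda>k l. (\<Sum>j<n. Tj j k * Tj j l) / real n)"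

definition tstar :: "nat \<Rightarrow> nat \<Rightarrow> (nat \<Rightarrow> nat \<Rightarrow> real) \<Rightarrow> real" where
  "tstar m n Tj = Max (insert 0 ((\<lambda>j. vnorm m (Tj j)) ` {..<n}))"

definition tbar :: "nat \<Rightarrow> (nat \<Rightarrow> nat \<Rightarrow> real) \<Rightarrow> nat \<Rightarrow> real" where
  "tbar n Tj = (\<lambda>k. (\<Sum>j<n. Tj j k) / real n)"

definition rms :: "nat \<Rightarrow> (nat \<Rightarrow> real) \<Rightarrow> real" where
  "rms n f = sqrt ((\<Sum>j<n. (f j)\<^sup>2) / real n)"

lemma rms_nonneg [simp]: "0 \<le> rms n f"
  by (simp add: rms_def sum_nonneg)

lemma qform_Smat: "qform m (Smat n Tj) a = (\<Sum>j<n. (vdot m a (Tj j))\<^sup>2) / real n"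
proof -
  have "qform m (Smat n Tj) a = (\<Sum>i<m. \<Sum>k<m. \<Sum>j<n. a i * Tj j i * (Tj j k * a k)) / real n"
    by (simp add: qform_eq_sum Smat_def sum_divide_distrib sum_distrib_left sum_distrib_right mult_ac)
  also have "\<dots> = (\<Sum>j<n. \<Sum>i<m. \<Sum>k<m. a i * Tj j i * (Tj j k * a k)) / real n"
    by (subst sum.swap, rule arg_cong[where f="\<lambda>x. x / real n"], rule sum.cong[OF refl], rule sum.swap)
  also have "\<dots> = (\<Sum>j<n. (vdot m a (Tj j))\<^sup>2) / real n"
    unfolding vdot_def power2_eq_square sum_product by (simp add: mult_ac)
  finally show ?thesis .
qed

lemma qform_Smat_nonneg: "0 \<le> qform m (Smat n Tj) a"
  by (simp add: qform_Smat sum_nonneg)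

lemma rms_vdot: "rms n (\<lambda>j. vdot m a (Tj j)) = sqrt (qform m (Smat n Tj) a)"
  by (simp add: rms_def qform_Smat)

lemma tstar_nonneg: "0 \<le> tstar m n Tj"
  unfolding tstar_def by (rule Max_ge) auto

lemma abs_vdot_le_tstar: "j < n \<Longrightarrow> \<bar>vdot m a (Tj j)\<bar> \<le> vnorm m a * tstar m n Tj"
proof -
  assume "j < n"
  then have "vnorm m (Tj j) \<le> tstar m n Tj" unfolding tstar_def by (intro Max_ge) auto
  then show ?thesis using abs_vdot_le[of m a "Tj j"] by (meson mult_left_mono order_trans vnorm_nonneg)
qed

lemma qform_Smat_le_tstar:
  assumes "n > 0"
  shows "qform m (Smat n Tj) a \<le> (tstar m n Tj)\<^sup>2 * (vnorm m a)\<^sup>2"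
proof -
  have "(vdot m a (Tj j))\<^sup>2 \<le> (tstar m n Tj)\<^sup>2 * (vnorm m a)\<^sup>2" if "j < n" for j
    using power_mono[OF abs_vdot_le_tstar[OF that, of m a Tj], of 2]
    by (simp add: power_mult_distrib mult.commute)
  then have "(\<Sum>j<n. (vdot m a (Tj j))\<^sup>2) \<le> real n * ((tstar m n Tj)\<^sup>2 * (vnorm m a)\<^sup>2)"
    using sum_mono[of "{..<n}" "\<lambda>j. (vdot m a (Tj j))\<^sup>2" "\<lambda>_. (tstar m n Tj)\<^sup>2 * (vnorm m a)\<^sup>2"]
    by simp
  then show ?thesis using assms by (simp add: qform_Smat divide_le_eq mult.commute)
qed

lemma sum_vdot_tbar:
  assumes "n > 0"
  shows "(\<Sum>j<n. vdot m x (Tj j)) = real n * vdot m x (tbar n Tj)"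
proof -
  have "(\<Sum>j<n. vdot m x (Tj j)) = (\<Sum>k<m. x k * (\<Sum>j<n. Tj j k))"
    unfolding vdot_def by (subst sum.swap) (simp add: sum_distrib_left)
  moreover have "vdot m x (tbar n Tj) = (\<Sum>k<m. x k * (\<Sum>j<n. Tj j k)) / real n"
    unfolding vdot_def tbar_def times_divide_eq_right by (rule sum_divide_distrib[symmetric])
  ultimately show ?thesis using assms by simp
qed

lemma mv_Smat:
  assumes "k < m"
  shows "mv m (Smat n Tj) z k = (\<Sum>j<n. Tj j k * vdot m z (Tj j)) / real n"
proof -
  have "mv m (Smat n Tj) z k = (\<Sum>l<m. \<Sum>j<n. Tj j k * (Tj j l * z l)) / real n"
    using assms by (simp add: mv_def Smat_def sum_divide_distrib sum_distrib_left sum_distrib_right mult_ac)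
  also have "\<dots> = (\<Sum>j<n. Tj j k * vdot m z (Tj j)) / real n"
    by (subst sum.swap) (simp add: vdot_def sum_distrib_left mult_ac)
  finally show ?thesis .
qed

lemma sum_vdot_scaleR:
  fixes P :: "nat \<Rightarrow> 'b::real_vector"
  shows "(\<Sum>j<n. vdot m a (Tj j) *\<^sub>R P j) = (\<Sum>k<m. a k *\<^sub>R (\<Sum>j<n. Tj j k *\<^sub>R P j))"
proof -
  have "(\<Sum>j<n. vdot m a (Tj j) *\<^sub>R P j) = (\<Sum>j<n. \<Sum>k<m. a k *\<^sub>R (Tj j k *\<^sub>R P j))"
    by (simp add: vdot_def scaleR_sum_left mult.commute)
  also have "\<dots> = (\<Sum>k<m. a k *\<^sub>R (\<Sum>j<n. Tj j k *\<^sub>R P j))"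
    by (subst sum.swap) (simp add: scaleR_sum_right)
  finally show ?thesis .
qed

lemma norm_sum_scaleR_le:
  fixes V :: "nat \<Rightarrow> 'b::real_normed_vector"
  shows "norm (\<Sum>k<m. a k *\<^sub>R V k) \<le> vnorm m a * sqrt (\<Sum>k<m. (norm (V k))\<^sup>2)"
proof -
  have "norm (\<Sum>k<m. a k *\<^sub>R V k) \<le> (\<Sum>k<m. \<bar>a k\<bar> * \<bar>norm (V k)\<bar>)"
    using norm_sum[of "\<lambda>k. a k *\<^sub>R V k" "{..<m}"] by simp
  also have "\<dots> \<le> L2_set a {..<m} * L2_set (\<lambda>k. norm (V k)) {..<m}"
    by (rule L2_set_mult_ineq)
  finally show ?thesis by (simp add: vnorm_eq_L2_set L2_set_def)
qed

lemma mean_abs_mult_le_rms: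
  assumes "n > 0"
  shows "(\<Sum>j<n. \<bar>a j\<bar> * \<bar>b j\<bar>) / real n \<le> rms n a * rms n b"
proof -
  have "(\<Sum>j<n. \<bar>a j\<bar> * \<bar>b j\<bar>) \<le> sqrt (\<Sum>j<n. (a j)\<^sup>2) * sqrt (\<Sum>j<n. (b j)\<^sup>2)"
    using L2_set_mult_ineq[of a b "{..<n}"] by (simp add: L2_set_def)
  moreover have "sqrt (real n) * sqrt (real n) = real n" by simp
  ultimately show ?thesis
    using assms by (simp add: rms_def real_sqrt_divide divide_right_mono field_simps)
qed

lemma norm_mean_scaleR_le:
  fixes P :: "nat \<Rightarrow> 'b::real_normed_vector"
  assumes "n > 0"
  shows "norm ((\<Sum>j<n. a j *\<^sub>R P j) /\<^sub>R real n) \<le> rms n a * rms n (\<lambda>j. norm (P j))"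
proof -
  have "norm ((\<Sum>j<n. a j *\<^sub>R P j) /\<^sub>R real n) = norm (\<Sum>j<n. a j *\<^sub>R P j) / real n"
    using assms by (simp add: divide_inverse mult.commute)
  also have "\<dots> \<le> (\<Sum>j<n. \<bar>a j\<bar> * \<bar>norm (P j)\<bar>) / real n"
    using norm_sum[of "\<lambda>j. a j *\<^sub>R P j" "{..<n}"] by (intro divide_right_mono) auto
  also have "\<dots> \<le> rms n a * rms n (\<lambda>j. norm (P j))"
    by (rule mean_abs_mult_le_rms[OF assms])
  finally show ?thesis .
qed

section \<open>The empirical likelihood equations\<close>

lemma el_root_sum_vdot:
  assumes "el_root m n Tj z"
  shows "(\<Sum>j<n. vdot m w (Tj j) / (1 + vdot m z (Tj j))) = 0"
proof -
  have "(\<Sum>j<n. vdot m w (Tj j) / (1 + vdot m z (Tj j)))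
      = (\<Sum>k<m. w k * (\<Sum>j<n. Tj j k / (1 + vdot m z (Tj j))))"
    unfolding vdot_def[of m w] sum_divide_distrib by (subst sum.swap) (simp add: sum_distrib_left)
  also have "\<dots> = 0" using assms by (simp add: el_root_def)
  finally show ?thesis .
qed

text \<open>Testing the equations against \<open>\<zeta>\<close> itself and using \<open>u/(1+u) = u - u\<^sup>2/(1+u)\<close>
  gives \<open>\<zeta>\<^sup>T\<bbbS>\<^sub>n\<zeta> \<le> (1 + |\<zeta>| T\<^sup>*) \<zeta>\<^sup>T T\<close>-bar.\<close>

lemma el_root_norm_bound:
  assumes R: "el_root m n Tj z" and n: "n > 0"
    and pd: "\<And>a. lam * (vnorm m a)\<^sup>2 \<le> qform m (Smat n Tj) a"
  shows "vnorm m z * (lam - vnorm m (tbar n Tj) * tstar m n Tj) \<le> vnorm m (tbar n Tj)"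
proof -
  define u where "u j = vdot m z (Tj j)" for j
  define zz where "zz = vnorm m z"
  define tb where "tb = vnorm m (tbar n Tj)"
  define ts where "ts = tstar m n Tj"
  have pos: "1 + u j > 0" if "j < n" for j using R that by (simp add: el_root_def u_def)
  have zts: "0 \<le> zz * ts" by (simp add: zz_def ts_def tstar_nonneg)
  have "(\<Sum>j<n. u j / (1 + u j)) = 0" using el_root_sum_vdot[OF R, of z] by (simp add: u_def)
  moreover have "u j / (1 + u j) = u j - (u j)\<^sup>2 / (1 + u j)" if "j < n" for j
    using pos[OF that] by (simp add: field_simps power2_eq_square)
  ultimately have "real n * vdot m z (tbar n Tj) = (\<Sum>j<n. (u j)\<^sup>2 / (1 + u j))"
    using sum_vdot_tbar[OF n, of m z Tj] by (simp add: u_def sum_subtractf)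
  moreover have "(\<Sum>j<n. (u j)\<^sup>2 / (1 + zz * ts)) \<le> (\<Sum>j<n. (u j)\<^sup>2 / (1 + u j))"
  proof (rule sum_mono)
    fix j assume "j \<in> {..<n}"
    then have "j < n" by simp
    then show "(u j)\<^sup>2 / (1 + zz * ts) \<le> (u j)\<^sup>2 / (1 + u j)"
      using pos abs_vdot_le_tstar[of j n m z Tj]
      by (intro divide_left_mono) (auto simp: abs_le_iff u_def zz_def ts_def)
  qed
  moreover have "(\<Sum>j<n. (u j)\<^sup>2 / (1 + zz * ts)) = real n * qform m (Smat n Tj) z / (1 + zz * ts)"
    using n by (simp add: qform_Smat u_def flip: sum_divide_distrib)
  moreover have "vdot m z (tbar n Tj) \<le> zz * tb" unfolding zz_def tb_def by (rule vdot_le)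
  ultimately have "real n * qform m (Smat n Tj) z / (1 + zz * ts) \<le> real n * (zz * tb)"
    using n by (smt (verit) mult_left_mono of_nat_0_le_iff)
  then have "real n * qform m (Smat n Tj) z \<le> real n * (zz * tb * (1 + zz * ts))"
    using n zts by (simp add: field_simps)
  then have "qform m (Smat n Tj) z \<le> zz * tb * (1 + zz * ts)"
    using n by (simp add: mult_le_cancel_left_pos)
  then have key: "zz * (lam * zz) \<le> zz * (tb * (1 + zz * ts))"
    using pd[of z] by (simp add: zz_def power2_eq_square algebra_simps)
  show ?thesis
  proof (cases "zz = 0")
    case False
    then have "zz > 0" by (simp add: zz_def order_less_le)
    then have "lam * zz \<le> tb * (1 + zz * ts)" using key by (simp add: mult_le_cancel_left_pos)
    then show ?thesis by (simp add: zz_def [symmetric] tb_def [symmetric] ts_def [symmetric] algebra_simps)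
  qed (simp add: zz_def)
qed

lemma el_root_unique:
  assumes R1: "el_root m n Tj z1" and R2: "el_root m n Tj z2"
    and lam: "lam > 0" and pd: "\<And>a. lam * (vnorm m a)\<^sup>2 \<le> qform m (Smat n Tj) a"
  shows "z1 = z2"
proof -
  define w where "w k = z2 k - z1 k" for k
  define a where "a j = vdot m z1 (Tj j)" for j
  define b where "b j = vdot m z2 (Tj j)" for j
  define c where "c j = vdot m w (Tj j)" for j
  have cab: "c j = b j - a j" for j
    by (simp add: c_def a_def b_def w_def vdot_def sum_subtractf left_diff_distrib)
  have pa: "1 + a j > 0" if "j < n" for j using R1 that by (simp add: el_root_def a_def)
  have pb: "1 + b j > 0" if "j < n" for j using R2 that by (simp add: el_root_def b_def)
  have "(\<Sum>j<n. c j / (1 + a j) - c j / (1 + b j)) = 0"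
    using el_root_sum_vdot[OF R1, of w] el_root_sum_vdot[OF R2, of w]
    by (simp add: c_def a_def b_def sum_subtractf)
  moreover have "c j / (1 + a j) - c j / (1 + b j) = (c j)\<^sup>2 / ((1 + a j) * (1 + b j))"
    if "j < n" for j
    using pa[OF that] pb[OF that] by (simp add: cab field_simps power2_eq_square)
  ultimately have "(\<Sum>j<n. (c j)\<^sup>2 / ((1 + a j) * (1 + b j))) = 0" by simp
  then have "\<forall>j\<in>{..<n}. (c j)\<^sup>2 / ((1 + a j) * (1 + b j)) = 0"
    using pa pb by (subst sum_nonneg_eq_0_iff[symmetric]) (auto intro!: divide_nonneg_pos)
  then have "c j = 0" if "j < n" for j using that pa[OF that] pb[OF that] by auto
  then have "qform m (Smat n Tj) w = 0" by (simp add: qform_Smat c_def)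
  then have "vnorm m w = 0" using pd[of w] lam by (simp add: mult_le_0_iff)
  then have "z1 k = z2 k" if "k < m" for k using vnorm_eq_0D[of m w k] that by (simp add: w_def)
  moreover have "z1 k = z2 k" if "k \<ge> m" for k using R1 R2 that by (simp add: el_root_def extvec_def)
  ultimately show ?thesis by (meson ext not_le)
qed

lemma ln_one_plus_le:
  fixes u :: real
  assumes "\<bar>u\<bar> \<le> 1/2"
  shows "ln (1 + u) \<le> u - u\<^sup>2 / 3"
proof -
  define f where "f x = x - x\<^sup>2 / 3 - ln (1 + x)" for x :: real
  have D: "DERIV f x :> x * (1 - 2 * x) / (3 * (1 + x))" if "\<bar>x\<bar> \<le> 1/2" for x
  proof -
    have px: "1 + x > 0" using that by linarith
    have "DERIV f x :> 1 - 2 * x / 3 - 1 / (1 + x)"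
      unfolding f_def using px by (auto intro!: derivative_eq_intros simp: power2_eq_square)
    moreover have "1 - 2 * x / 3 - 1 / (1 + x) = x * (1 - 2 * x) / (3 * (1 + x))"
      using px by (simp add: field_simps)
    ultimately show ?thesis by simp
  qed
  have "f 0 \<le> f u"
  proof (cases "u \<ge> 0")
    case True
    show ?thesis
    proof (rule DERIV_nonneg_imp_nondecreasing[OF True])
      fix x assume x: "0 \<le> x" "x \<le> u"
      then have ax: "\<bar>x\<bar> \<le> 1/2" using assms by linarith
      have "x * (1 - 2 * x) / (3 * (1 + x)) \<ge> 0" using x ax
        by (intro divide_nonneg_pos mult_nonneg_nonneg) auto
      then show "\<exists>y. DERIV f x :> y \<and> 0 \<le> y" using D[OF ax] by blast
    qed
  next
    case False
    then have "u \<le> 0" by simp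
    then show ?thesis
    proof (rule DERIV_nonpos_imp_nonincreasing)
      fix x assume x: "u \<le> x" "x \<le> 0"
      then have ax: "\<bar>x\<bar> \<le> 1/2" using assms by linarith
      have "x * (1 - 2 * x) / (3 * (1 + x)) \<le> 0" using x ax
        by (intro divide_nonpos_pos mult_nonpos_nonneg) auto
      then show "\<exists>y. DERIV f x :> y \<and> y \<le> 0" using D[OF ax] by blast
    qed
  qed
  then show ?thesis by (simp add: f_def)
qed

text \<open>The EL equations are the critical-point equations of the negative empirical
  log-likelihood ratio \<open>el_loss\<close>, which we minimise over a ball.\<close>

definition el_loss :: "nat \<Rightarrow> nat \<Rightarrow> (nat \<Rightarrow> nat \<Rightarrow> real) \<Rightarrow> (nat \<Rightarrow> real) \<Rightarrow> real" where
  "el_loss m n Tj x = - (\<Sum>j<n. ln (1 + vdot m x (Tj j)))"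

lemma el_loss_pos:
  assumes n: "n > 0" and pd: "\<And>a. lam * (vnorm m a)\<^sup>2 \<le> qform m (Smat n Tj) a"
    and x: "vnorm m x * tstar m n Tj \<le> 1/2"
    and gap: "3 * vnorm m (tbar n Tj) < lam * vnorm m x"
  shows "el_loss m n Tj x > 0"
proof -
  define u where "u j = vdot m x (Tj j)" for j
  have "\<bar>u j\<bar> \<le> 1/2" if "j < n" for j
    using abs_vdot_le_tstar[OF that, of m x Tj] x by (simp add: u_def)
  then have "(\<Sum>j<n. ln (1 + u j)) \<le> (\<Sum>j<n. u j - (u j)\<^sup>2 / 3)"
    by (intro sum_mono ln_one_plus_le) auto
  also have "\<dots> = real n * vdot m x (tbar n Tj) - real n * qform m (Smat n Tj) x / 3"
    using sum_vdot_tbar[OF n, of m x Tj] n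
    by (simp add: u_def sum_subtractf qform_Smat flip: sum_divide_distrib)
  also have "\<dots> \<le> real n * (vnorm m x * vnorm m (tbar n Tj)) - real n * (lam * (vnorm m x)\<^sup>2) / 3"
    using vdot_le[of m x "tbar n Tj"] pd[of x] by (intro diff_mono divide_right_mono mult_left_mono) auto
  also have "\<dots> = - real n * vnorm m x * (lam * vnorm m x - 3 * vnorm m (tbar n Tj)) / 3"
    by (simp add: power2_eq_square algebra_simps)
  also have "\<dots> < 0"
  proof -
    have "0 < lam * vnorm m x" using gap vnorm_nonneg[of m "tbar n Tj"] by linarith
    then have "0 < vnorm m x" by (cases "vnorm m x = 0") (auto simp: less_le)
    then show ?thesis using n gap by (intro divide_neg_pos mult_neg_pos) auto
  qed
  finally show ?thesis by (simp add: el_loss_def u_def)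
qed

lemma el_root_of_local_min:
  assumes x: "x \<in> extvec m" and pos: "\<forall>j<n. 0 < 1 + vdot m x (Tj j)" and d: "d > 0"
    and min: "\<And>k t. k < m \<Longrightarrow> \<bar>t\<bar> < d \<Longrightarrow>
      el_loss m n Tj x \<le> el_loss m n Tj (\<lambda>i. x i + t * unit_vec k i)"
  shows "el_root m n Tj x"
proof -
  have "(\<Sum>j<n. Tj j k / (1 + vdot m x (Tj j))) = 0" if k: "k < m" for k
  proof -
    define h where "h t = el_loss m n Tj (\<lambda>i. x i + t * unit_vec k i)" for t
    have h: "h = (\<lambda>t. - (\<Sum>j<n. ln (1 + (vdot m x (Tj j) + t * Tj j k))))"
      by (simp add: fun_eq_iff h_def el_loss_def vdot_add_unit_vec[OF k])
    have "DERIV h 0 :> - (\<Sum>j<n. Tj j k / (1 + vdot m x (Tj j)))"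
      unfolding h using pos by (auto intro!: derivative_eq_intros sum.cong)
    moreover have "\<forall>t. \<bar>0 - t\<bar> < d \<longrightarrow> h 0 \<le> h t"
      using min[OF k] by (simp add: h_def)
    ultimately have "- (\<Sum>j<n. Tj j k / (1 + vdot m x (Tj j))) = 0"
      by (rule DERIV_local_min[OF _ d])
    then show ?thesis by simp
  qed
  then show ?thesis using x pos by (simp add: el_root_def)
qed

lemma compact_extvec_vnorm_le: "compact {x \<in> extvec m. vnorm m x \<le> r}"
proof -
  define X where "X k = (if k < m then {-r..r} else {0::real})" for k
  have "compactin (product_topology (\<lambda>_. euclidean) UNIV) (PiE UNIV X)"
    by (subst compactin_PiE) (auto simp: X_def)
  then have "compact (PiE UNIV X)" by (simp add: euclidean_product_topology)
  moreover have "closed {x :: nat \<Rightarrow> real. vnorm m x \<le> r}"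
    by (rule closed_Collect_le[OF continuous_on_vnorm continuous_on_const])
  ultimately have "compact (PiE UNIV X \<inter> {x. vnorm m x \<le> r})" by (rule compact_Int_closed)
  moreover have "PiE UNIV X \<inter> {x. vnorm m x \<le> r} \<subseteq> {x \<in> extvec m. vnorm m x \<le> r}"
  proof
    fix x assume x: "x \<in> PiE UNIV X \<inter> {x. vnorm m x \<le> r}"
    have "x k = 0" if "m \<le> k" for k
    proof -
      have "x k \<in> X k" using x by (simp add: PiE_iff)
      then show ?thesis using that by (simp add: X_def)
    qed
    then show "x \<in> {x \<in> extvec m. vnorm m x \<le> r}" using x by (simp add: extvec_def)
  qed
  moreover have "{x \<in> extvec m. vnorm m x \<le> r} \<subseteq> PiE UNIV X \<inter> {x. vnorm m x \<le> r}"
  proof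
    fix x assume x: "x \<in> {x \<in> extvec m. vnorm m x \<le> r}"
    have "x k \<in> X k" for k
    proof (cases "k < m")
      case True
      then show ?thesis using abs_le_vnorm[OF True, of x] x by (simp add: X_def abs_le_iff)
    qed (use x in \<open>simp add: X_def extvec_def\<close>)
    then show "x \<in> PiE UNIV X \<inter> {x. vnorm m x \<le> r}" using x by (simp add: PiE_iff)
  qed
  ultimately show ?thesis by (metis subset_antisym)
qed

lemma el_root_exists:
  assumes m: "m > 0" and n: "n > 0" and lam: "lam > 0"
    and pd: "\<And>a. lam * (vnorm m a)\<^sup>2 \<le> qform m (Smat n Tj) a"
    and small: "6 * vnorm m (tbar n Tj) * tstar m n Tj < lam"
  shows "\<exists>z. el_root m n Tj z"
proof -
  define ts where "ts = tstar m n Tj"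
  have "lam \<le> ts\<^sup>2"
    using pd[of "unit_vec 0"] qform_Smat_le_tstar[OF n, of m Tj "unit_vec 0"] m
    by (simp add: ts_def vnorm_unit_vec)
  then have ts: "ts > 0" using lam tstar_nonneg[of m n Tj] by (cases "ts = 0") (auto simp: ts_def)
  define r where "r = 1 / (2 * ts)"
  have r: "r > 0" "r * ts = 1/2" using ts by (simp_all add: r_def)
  define K where "K = {x \<in> extvec m. vnorm m x \<le> r}"
  have bounded_u: "\<bar>vdot m x (Tj j)\<bar> \<le> 1/2" if "x \<in> K" "j < n" for x j
  proof -
    have "\<bar>vdot m x (Tj j)\<bar> \<le> vnorm m x * ts" unfolding ts_def by (rule abs_vdot_le_tstar[OF that(2)])
    also have "\<dots> \<le> r * ts" using that(1) ts by (intro mult_right_mono) (auto simp: K_def)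
    finally show ?thesis using r by simp
  qed
  have "continuous_on K (el_loss m n Tj)"
    unfolding el_loss_def[abs_def]
  proof (intro continuous_intros ballI)
    fix x j assume "x \<in> K" "j \<in> {..<n}"
    then show "1 + vdot m x (Tj j) \<noteq> 0" using bounded_u[of x j] by auto
  qed
  moreover have "(\<lambda>_. 0) \<in> K" using r by (simp add: K_def extvec_def vnorm_def)
  ultimately obtain x0 where x0: "x0 \<in> K" and x0_min: "\<And>y. y \<in> K \<Longrightarrow> el_loss m n Tj x0 \<le> el_loss m n Tj y"
    using continuous_attains_inf[OF compact_extvec_vnorm_le[of m r, folded K_def]] by blast
  have "el_loss m n Tj x0 \<le> 0"
    using x0_min[OF \<open>(\<lambda>_. 0) \<in> K\<close>] by (simp add: el_loss_def vdot_def)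
  moreover have "el_loss m n Tj x0 > 0" if "vnorm m x0 = r"
  proof (rule el_loss_pos[OF n pd])
    show "vnorm m x0 * tstar m n Tj \<le> 1/2" using r that by (simp add: ts_def)
    have "3 * vnorm m (tbar n Tj) = 6 * vnorm m (tbar n Tj) * ts * r"
      using r(2) by (simp add: algebra_simps)
    also have "\<dots> < lam * r" using small r(1) by (simp add: ts_def)
    finally show "3 * vnorm m (tbar n Tj) < lam * vnorm m x0" using that by simp
  qed
  ultimately have inner: "vnorm m x0 < r" using x0 unfolding K_def by fastforce
  show ?thesis
  proof (intro exI el_root_of_local_min)
    show "x0 \<in> extvec m" using x0 by (simp add: K_def)
    show "\<forall>j<n. 0 < 1 + vdot m x0 (Tj j)"
    proof (intro allI impI)
      fix j assume "j < n"
      then show "0 < 1 + vdot m x0 (Tj j)" using bounded_u[OF x0, of j] by linarith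
    qed
    show "r - vnorm m x0 > 0" using inner by simp
    fix k t assume k: "k < m" and t: "\<bar>t\<bar> < r - vnorm m x0"
    have "vnorm m (\<lambda>i. x0 i + t * unit_vec k i) \<le> vnorm m x0 + \<bar>t\<bar>"
      using vnorm_add_le[of m x0 "\<lambda>i. t * unit_vec k i"] by (simp add: vnorm_mult vnorm_unit_vec[OF k])
    moreover have "(\<lambda>i. x0 i + t * unit_vec k i) \<in> extvec m"
      using x0 k by (auto simp: K_def extvec_def unit_vec_def)
    ultimately show "el_loss m n Tj x0 \<le> el_loss m n Tj (\<lambda>i. x0 i + t * unit_vec k i)"
      using t by (intro x0_min) (simp add: K_def)
  qed
qed

text \<open>On this event the sample matrix \<open>\<bbbS>\<^sub>n\<close> inherits the regularity of \<open>W\<close>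
  (\<open>c/2\<close>), the EL equations have a unique root (\<open>6 \<cdot> c/13 < c/2\<close> in
  \<open>el_root_exists\<close>), and that root satisfies \<open>|\<zeta>| T\<^sup>* \<le> 3/13 < 1/2\<close>.\<close>

definition el_good :: "real \<Rightarrow> nat \<Rightarrow> (nat \<Rightarrow> nat \<Rightarrow> real) \<Rightarrow> nat \<Rightarrow> (nat \<Rightarrow> nat \<Rightarrow> real) \<Rightarrow> bool" where
  "el_good c m W n Tj \<longleftrightarrow> 0 < m \<and> 0 < n \<and> opnorm m (\<lambda>k l. Smat n Tj k l - W k l) \<le> c / 2 \<and>
     vnorm m (tbar n Tj) * tstar m n Tj \<le> c / 13"

lemma el_good_Smat_ge:
  assumes "el_good c m W n Tj" and "\<And>a. c * (vnorm m a)\<^sup>2 \<le> qform m W a"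
  shows "c / 2 * (vnorm m a)\<^sup>2 \<le> qform m (Smat n Tj) a"
proof -
  have "(c - c / 2) * (vnorm m a)\<^sup>2 \<le> qform m (Smat n Tj) a"
    using assms by (intro qform_ge_perturb) (auto simp: el_good_def)
  then show ?thesis by simp
qed

lemma el_good_ex1_root:
  assumes c: "0 < c" and good: "el_good c m W n Tj" and regl: "\<And>a. c * (vnorm m a)\<^sup>2 \<le> qform m W a"
  shows "\<exists>!z. el_root m n Tj z"
proof -
  have pd: "c / 2 * (vnorm m a)\<^sup>2 \<le> qform m (Smat n Tj) a" for a
    by (rule el_good_Smat_ge[OF good regl])
  have m: "0 < m" and n: "0 < n" and tb_ts: "vnorm m (tbar n Tj) * tstar m n Tj \<le> c / 13"
    using good by (simp_all add: el_good_def)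
  have "0 \<le> vnorm m (tbar n Tj) * tstar m n Tj" by (simp add: tstar_nonneg)
  then have "6 * vnorm m (tbar n Tj) * tstar m n Tj < c / 2" using tb_ts c by linarith
  then obtain z where z: "el_root m n Tj z"
    using el_root_exists[OF m n _ pd] c by auto
  show ?thesis
  proof (rule ex1I[of _ z])
    fix y assume "el_root m n Tj y"
    then show "y = z" using el_root_unique[OF _ z _ pd] c by simp
  qed (rule z)
qed

lemma el_good_root_norm_le:
  assumes c: "0 < c" and good: "el_good c m W n Tj" and regl: "\<And>a. c * (vnorm m a)\<^sup>2 \<le> qform m W a"
    and R: "el_root m n Tj z"
  shows "vnorm m z \<le> 3 * vnorm m (tbar n Tj) / c" and "vnorm m z * tstar m n Tj \<le> 1/2"
proof -
  have "vnorm m z * (c / 2 - vnorm m (tbar n Tj) * tstar m n Tj) \<le> vnorm m (tbar n Tj)"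
    using el_root_norm_bound[OF R _ el_good_Smat_ge[OF good regl]] good by (simp add: el_good_def)
  moreover have "vnorm m z * (c / 3) \<le> vnorm m z * (c / 2 - vnorm m (tbar n Tj) * tstar m n Tj)"
    using good c by (intro mult_left_mono) (auto simp: el_good_def)
  ultimately show zz: "vnorm m z \<le> 3 * vnorm m (tbar n Tj) / c" using c by (simp add: field_simps)
  have "vnorm m z * tstar m n Tj \<le> 3 * vnorm m (tbar n Tj) / c * tstar m n Tj"
    by (intro mult_right_mono zz) (simp add: tstar_nonneg)
  also have "\<dots> \<le> 1/2" using good c by (simp add: el_good_def field_simps)
  finally show "vnorm m z * tstar m n Tj \<le> 1/2" .
qed

section \<open>Expansion of the estimator\<close>

lemma el_root_tbar:
  assumes R: "el_root m n Tj z" and k: "k < m" and n: "n > 0"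
  shows "tbar n Tj k = mv m (Smat n Tj) z k
     - (\<Sum>j<n. Tj j k * ((vdot m z (Tj j))\<^sup>2 / (1 + vdot m z (Tj j)))) / real n"
proof -
  define u where "u j = vdot m z (Tj j)" for j
  have pos: "1 + u j > 0" if "j < n" for j using R that by (simp add: el_root_def u_def)
  have "Tj j k - Tj j k * u j + Tj j k * ((u j)\<^sup>2 / (1 + u j)) = Tj j k / (1 + u j)"
    if "j < n" for j using pos[OF that] by (simp add: field_simps power2_eq_square)
  then have "(\<Sum>j<n. Tj j k - Tj j k * u j + Tj j k * ((u j)\<^sup>2 / (1 + u j))) = (\<Sum>j<n. Tj j k / (1 + u j))"
    by (intro sum.cong) auto
  also have "\<dots> = 0" using R k by (simp add: el_root_def u_def)
  finally have "(\<Sum>j<n. Tj j k - Tj j k * u j + Tj j k * ((u j)\<^sup>2 / (1 + u j))) = 0" .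
  then have "(\<Sum>j<n. Tj j k) = (\<Sum>j<n. Tj j k * u j) - (\<Sum>j<n. Tj j k * ((u j)\<^sup>2 / (1 + u j)))"
    by (simp add: sum.distrib sum_subtractf)
  then show ?thesis using mv_Smat[OF k] by (simp add: tbar_def u_def diff_divide_distrib)
qed

lemma vdot_el_root_remainder_le:
  assumes n: "n > 0" and small: "vnorm m z * tstar m n Tj \<le> 1/2"
  shows "vdot m w (\<lambda>k. (\<Sum>j<n. Tj j k * ((vdot m z (Tj j))\<^sup>2 / (1 + vdot m z (Tj j)))) / real n)
     \<le> vnorm m w * (2 * tstar m n Tj * qform m (Smat n Tj) z)"
proof -
  define u where "u j = vdot m z (Tj j)" for j
  define q where "q j = (u j)\<^sup>2 / (1 + u j)" for j
  define ts where "ts = tstar m n Tj"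
  have "vdot m w (\<lambda>k. (\<Sum>j<n. Tj j k * q j) / real n) = (\<Sum>k<m. \<Sum>j<n. w k * (Tj j k * q j)) / real n"
    by (simp add: vdot_def sum_distrib_left sum_divide_distrib)
  also have "\<dots> = (\<Sum>j<n. vdot m w (Tj j) * q j) / real n"
    by (subst sum.swap) (simp add: vdot_def sum_distrib_left sum_distrib_right mult_ac)
  also have "\<dots> \<le> (\<Sum>j<n. vnorm m w * ts * (2 * (u j)\<^sup>2)) / real n"
  proof (intro divide_right_mono sum_mono)
    fix j assume "j \<in> {..<n}"
    then have j: "j < n" by simp
    have pos: "1 + u j \<ge> 1/2"
      using abs_vdot_le_tstar[OF j, of m z Tj] small by (simp add: u_def)
    have "q j \<le> (u j)\<^sup>2 / (1/2)"
      unfolding q_def using pos by (intro divide_left_mono) auto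
    then have q: "0 \<le> q j" "q j \<le> 2 * (u j)\<^sup>2"
      using pos by (simp_all add: q_def)
    have "vdot m w (Tj j) * q j \<le> \<bar>vdot m w (Tj j)\<bar> * q j"
      using q by (intro mult_right_mono) auto
    also have "\<dots> \<le> (vnorm m w * ts) * (2 * (u j)\<^sup>2)"
      using abs_vdot_le_tstar[OF j, of m w Tj] q by (intro mult_mono) (auto simp: ts_def tstar_nonneg)
    finally show "vdot m w (Tj j) * q j \<le> vnorm m w * ts * (2 * (u j)\<^sup>2)" .
  qed simp
  also have "\<dots> = vnorm m w * (2 * ts * qform m (Smat n Tj) z)"
    by (simp add: qform_Smat u_def sum_distrib_left[symmetric] mult_ac)
  finally show ?thesis by (simp add: q_def u_def ts_def)
qed

text \<open>The leading term of \<open>\<zeta>\<close> is \<open>W\<^sup>-\<^sup>1 T\<close>-bar: subtracting it, the EL equations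
  leave \<open>W w = (W - \<bbbS>\<^sub>n) \<zeta> + O(T\<^sup>* \<zeta>\<^sup>T\<bbbS>\<^sub>n\<zeta>)\<close>.\<close>

lemma el_root_centre_bound:
  assumes R: "el_root m n Tj z" and n: "n > 0" and c: "c > 0"
    and regl: "\<And>a. c * (vnorm m a)\<^sup>2 \<le> qform m W a"
    and small: "vnorm m z * tstar m n Tj \<le> 1/2"
  shows "c * vnorm m (\<lambda>k. z k - mv m (minv m W) (tbar n Tj) k)
     \<le> opnorm m (\<lambda>k l. Smat n Tj k l - W k l) * vnorm m z + 2 * tstar m n Tj * qform m (Smat n Tj) z"
proof -
  define w where "w = (\<lambda>k. z k - mv m (minv m W) (tbar n Tj) k)"
  define D where "D = (\<lambda>k l. Smat n Tj k l - W k l)"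
  define r where "r k = (\<Sum>j<n. Tj j k * ((vdot m z (Tj j))\<^sup>2 / (1 + vdot m z (Tj j)))) / real n" for k
  have "mv m W w k = r k - mv m D z k" if k: "k < m" for k
  proof -
    have "mv m W w k = mv m W z k - mv m W (mv m (minv m W) (tbar n Tj)) k"
      using k by (simp add: mv_def w_def right_diff_distrib sum_subtractf)
    moreover have "mv m W (mv m (minv m W) (tbar n Tj)) k = tbar n Tj k"
      by (rule mv_mv_right_inverse[OF minv_right_inverse[OF c regl] k])
    moreover have "mv m D z k = mv m (Smat n Tj) z k - mv m W z k"
      using k by (simp add: mv_def D_def left_diff_distrib sum_subtractf)
    ultimately show ?thesis using el_root_tbar[OF R k n] by (simp add: r_def)
  qed
  then have "qform m W w = vdot m w r - vdot m w (mv m D z)"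
    unfolding qform_def vdot_def by (simp add: right_diff_distrib sum_subtractf)
  moreover have "- vdot m w (mv m D z) \<le> vnorm m w * (opnorm m D * vnorm m z)"
    using abs_vdot_le[of m w "mv m D z"] mult_left_mono[OF vnorm_mv_le_opnorm[of m D z], of "vnorm m w"]
    by simp
  moreover have "vdot m w r \<le> vnorm m w * (2 * tstar m n Tj * qform m (Smat n Tj) z)"
    unfolding r_def by (rule vdot_el_root_remainder_le[OF n small])
  ultimately have "vnorm m w * (c * vnorm m w)
      \<le> vnorm m w * (opnorm m D * vnorm m z + 2 * tstar m n Tj * qform m (Smat n Tj) z)"
    using regl[of w] by (simp add: power2_eq_square algebra_simps)
  then have "c * vnorm m w \<le> opnorm m D * vnorm m z + 2 * tstar m n Tj * qform m (Smat n Tj) z"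
    by (rule mult_self_le_cancel[rotated 2]) (simp_all add: opnorm_nonneg tstar_nonneg qform_Smat_nonneg)
  then show ?thesis by (simp add: w_def D_def)
qed

lemma rms_le_mult:
  assumes c: "0 \<le> c" and le: "\<And>j. j < n \<Longrightarrow> \<bar>a j\<bar> \<le> c * \<bar>b j\<bar>"
  shows "rms n a \<le> c * rms n b"
proof -
  have "(a j)\<^sup>2 \<le> c\<^sup>2 * (b j)\<^sup>2" if "j < n" for j
    using power_mono[OF le[OF that], of 2] by (simp add: power_mult_distrib)
  then have "(\<Sum>j<n. (a j)\<^sup>2) \<le> c\<^sup>2 * (\<Sum>j<n. (b j)\<^sup>2)"
    unfolding sum_distrib_left by (intro sum_mono) auto
  then have "(\<Sum>j<n. (a j)\<^sup>2) / real n \<le> c\<^sup>2 * ((\<Sum>j<n. (b j)\<^sup>2) / real n)"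
    by (simp add: divide_right_mono)
  then have "rms n a \<le> sqrt (c\<^sup>2 * ((\<Sum>j<n. (b j)\<^sup>2) / real n))"
    unfolding rms_def by (rule real_sqrt_le_mono)
  also have "\<dots> = c * rms n b"
    by (simp only: rms_def real_sqrt_mult real_sqrt_abs abs_of_nonneg[OF c])
  finally show ?thesis .
qed

lemma rms_vdot_le:
  assumes K: "0 \<le> K" and Su: "\<And>a. qform m (Smat n Tj) a \<le> K * (vnorm m a)\<^sup>2"
  shows "rms n (\<lambda>j. vdot m a (Tj j)) \<le> sqrt K * vnorm m a"
proof -
  have "sqrt (qform m (Smat n Tj) a) \<le> sqrt (K * (vnorm m a)\<^sup>2)"
    by (rule real_sqrt_le_mono[OF Su])
  then show ?thesis by (simp add: rms_vdot real_sqrt_mult)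
qed

lemma norm_sum_scaleR_mean_le:
  fixes P :: "nat \<Rightarrow> 'b::real_normed_vector"
  assumes n: "n > 0" and K: "0 \<le> K" and Su: "\<And>a. qform m (Smat n Tj) a \<le> K * (vnorm m a)\<^sup>2"
  shows "norm (\<Sum>k<m. w k *\<^sub>R ((\<Sum>j<n. Tj j k *\<^sub>R P j) /\<^sub>R real n))
    \<le> sqrt K * vnorm m w * rms n (\<lambda>j. norm (P j))"
proof -
  have "(\<Sum>k<m. w k *\<^sub>R ((\<Sum>j<n. Tj j k *\<^sub>R P j) /\<^sub>R real n)) = (\<Sum>j<n. vdot m w (Tj j) *\<^sub>R P j) /\<^sub>R real n"
    by (simp add: sum_vdot_scaleR scaleR_sum_right mult_ac)
  also have "norm \<dots> \<le> rms n (\<lambda>j. vdot m w (Tj j)) * rms n (\<lambda>j. norm (P j))"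
    by (rule norm_mean_scaleR_le[OF n])
  also have "\<dots> \<le> sqrt K * vnorm m w * rms n (\<lambda>j. norm (P j))"
    by (intro mult_right_mono rms_vdot_le[OF K Su]) simp
  finally show ?thesis .
qed

text \<open>Second-order expansion of the weights: \<open>1/(1+u) = 1 - u + u\<^sup>2/(1+u)\<close>.\<close>

lemma norm_weighted_mean_remainder_le:
  fixes P :: "nat \<Rightarrow> 'b::real_normed_vector"
  assumes n: "n > 0" and u: "\<And>j. j < n \<Longrightarrow> \<bar>u j\<bar> \<le> \<rho>" and \<rho>: "\<rho> \<le> 1/2"
  shows "norm ((\<Sum>j<n. P j /\<^sub>R (1 + u j)) /\<^sub>R real n - (\<Sum>j<n. P j) /\<^sub>R real n
      + (\<Sum>j<n. u j *\<^sub>R P j) /\<^sub>R real n) \<le> 2 * \<rho> * rms n u * rms n (\<lambda>j. norm (P j))"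
proof -
  define q where "q j = (u j)\<^sup>2 / (1 + u j)" for j
  have pos: "1 + u j \<ge> 1/2" if "j < n" for j using u[OF that] \<rho> by linarith
  have "P j /\<^sub>R (1 + u j) = P j - u j *\<^sub>R P j + q j *\<^sub>R P j" if "j < n" for j
  proof -
    have "inverse (1 + u j) = 1 - u j + q j"
      using pos[OF that] by (simp add: q_def field_simps power2_eq_square)
    then show ?thesis by (simp add: scaleR_left_distrib scaleR_left_diff_distrib)
  qed
  then have "(\<Sum>j<n. P j /\<^sub>R (1 + u j)) = (\<Sum>j<n. P j - u j *\<^sub>R P j + q j *\<^sub>R P j)"
    by (intro sum.cong) auto
  then have "(\<Sum>j<n. P j /\<^sub>R (1 + u j)) /\<^sub>R real n - (\<Sum>j<n. P j) /\<^sub>R real n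
      + (\<Sum>j<n. u j *\<^sub>R P j) /\<^sub>R real n = (\<Sum>j<n. q j *\<^sub>R P j) /\<^sub>R real n"
    by (simp add: sum.distrib sum_subtractf scaleR_right_diff_distrib scaleR_add_right)
  moreover have "norm ((\<Sum>j<n. q j *\<^sub>R P j) /\<^sub>R real n) \<le> rms n q * rms n (\<lambda>j. norm (P j))"
    by (rule norm_mean_scaleR_le[OF n])
  moreover have "rms n q \<le> 2 * \<rho> * rms n u"
  proof (rule rms_le_mult)
    show "0 \<le> 2 * \<rho>" using u[OF n] by linarith
    fix j assume j: "j < n"
    have "q j \<le> (u j)\<^sup>2 / (1/2)" unfolding q_def using pos[OF j] by (intro divide_left_mono) auto
    moreover have "(u j)\<^sup>2 \<le> \<rho> * \<bar>u j\<bar>"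
      using mult_right_mono[OF u[OF j] abs_ge_zero[of "u j"]] by (simp add: power2_eq_square abs_mult_self_eq)
    ultimately show "\<bar>q j\<bar> \<le> 2 * \<rho> * \<bar>u j\<bar>" using pos[OF j] by (simp add: q_def)
  qed
  ultimately show ?thesis
    by (smt (verit, best) mult_right_mono rms_nonneg)
qed

lemma sum_mv_tbar_scaleR:
  fixes A :: "nat \<Rightarrow> 'b::real_vector"
  shows "(\<Sum>k<m. mv m B (tbar n Tj) k *\<^sub>R A k) = (\<Sum>i<n. \<Sum>k<m. mv m B (Tj i) k *\<^sub>R A k) /\<^sub>R real n"
proof -
  have "mv m B (tbar n Tj) k = (\<Sum>i<n. mv m B (Tj i) k) / real n" if "k < m" for k
  proof -
    have "mv m B (tbar n Tj) k = (\<Sum>l<m. \<Sum>i<n. B k l * Tj i l) / real n"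
      using that by (simp add: mv_def tbar_def sum_divide_distrib sum_distrib_left)
    also have "\<dots> = (\<Sum>i<n. mv m B (Tj i) k) / real n"
      using that by (subst sum.swap) (simp add: mv_def)
    finally show ?thesis .
  qed
  then have "(\<Sum>k<m. mv m B (tbar n Tj) k *\<^sub>R A k) = (\<Sum>k<m. (\<Sum>i<n. mv m B (Tj i) k) *\<^sub>R A k) /\<^sub>R real n"
    by (simp add: scaleR_sum_right divide_inverse_commute)
  also have "\<dots> = (\<Sum>i<n. \<Sum>k<m. mv m B (Tj i) k *\<^sub>R A k) /\<^sub>R real n"
    by (subst sum.swap) (simp add: scaleR_sum_left)
  finally show ?thesis .
qed

lemma el_remainder_arith:
  fixes c K s e3 ts tb zz :: real
  assumes c: "0 < c" and K: "0 \<le> K" and s: "0 \<le> s" and e3: "0 \<le> e3" and ts: "0 \<le> ts"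
    and zz: "0 \<le> zz" "zz \<le> 3 * tb / c"
  shows "2 * (zz * ts) * (sqrt K * zz) * s + sqrt K * ((e3 * zz + 2 * ts * K * zz\<^sup>2) / c) * s
    \<le> 18 * sqrt K * (c + K) / c ^ 3 * s * (e3 * tb + ts * tb\<^sup>2)"
proof -
  have "0 \<le> 3 * tb / c" using zz by linarith
  then have tb: "0 \<le> tb" using c by (simp add: zero_le_divide_iff)
  have zz2: "zz\<^sup>2 \<le> 9 * tb\<^sup>2 / c\<^sup>2"
    using power_mono[OF zz(2) zz(1), of 2] by (simp add: power_divide power_mult_distrib)
  have "2 * ts * zz\<^sup>2 + (e3 * zz + 2 * K * ts * zz\<^sup>2) / c
      \<le> 2 * ts * (9 * tb\<^sup>2 / c\<^sup>2) + (e3 * (3 * tb / c) + 2 * K * ts * (9 * tb\<^sup>2 / c\<^sup>2)) / c"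
    using zz zz2 c K ts e3 by (intro add_mono mult_left_mono divide_right_mono) auto
  also have "\<dots> = 3 / c\<^sup>2 * (e3 * tb) + 18 * (c + K) / c ^ 3 * (ts * tb\<^sup>2)"
    using c by (simp add: field_simps power2_eq_square power3_eq_cube)
  also have "\<dots> \<le> 18 * (c + K) / c ^ 3 * (e3 * tb + ts * tb\<^sup>2)"
  proof -
    have "3 / c\<^sup>2 \<le> 18 * (c + K) / c ^ 3"
      using c K by (simp add: field_simps power2_eq_square power3_eq_cube)
    then have "3 / c\<^sup>2 * (e3 * tb) \<le> 18 * (c + K) / c ^ 3 * (e3 * tb)"
      using e3 tb by (intro mult_right_mono) auto
    then show ?thesis by (simp add: distrib_left)
  qed
  finally have "2 * ts * zz\<^sup>2 + (e3 * zz + 2 * K * ts * zz\<^sup>2) / c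
      \<le> 18 * (c + K) / c ^ 3 * (e3 * tb + ts * tb\<^sup>2)" .
  then have "sqrt K * s * (2 * ts * zz\<^sup>2 + (e3 * zz + 2 * K * ts * zz\<^sup>2) / c)
      \<le> sqrt K * s * (18 * (c + K) / c ^ 3 * (e3 * tb + ts * tb\<^sup>2))"
    using K s by (intro mult_left_mono) auto
  then show ?thesis by (simp add: power2_eq_square algebra_simps)
qed

text \<open>With \<open>\<zeta> = v + w\<close> and \<open>v = B T\<close>-bar (in the application \<open>B = W\<^sup>-\<^sup>1\<close>),
  \<open>\<theta>\<^sub>n - \<psi>-bar + \<chi>-bar\<close> is the second-order remainder of the weights, minus \<open>w\<close>
  against the sample cross moments, minus \<open>v\<close> against their centred versions (B1),
  minus the term of (B2).\<close>

lemma el_estimator_decomposition: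
  fixes P X :: "nat \<Rightarrow> 'b::real_vector" and EE :: "nat \<Rightarrow> nat \<Rightarrow> 'b"
  shows "(\<Sum>j<n. P j /\<^sub>R (1 + vdot m z (Tj j))) /\<^sub>R real n - (\<Sum>j<n. P j) /\<^sub>R real n
      + (\<Sum>j<n. X j) /\<^sub>R real n
    = ((\<Sum>j<n. P j /\<^sub>R (1 + vdot m z (Tj j))) /\<^sub>R real n - (\<Sum>j<n. P j) /\<^sub>R real n
        + (\<Sum>j<n. vdot m z (Tj j) *\<^sub>R P j) /\<^sub>R real n)
      - (\<Sum>k<m. (z k - mv m B (tbar n Tj) k) *\<^sub>R ((\<Sum>j<n. Tj j k *\<^sub>R P j) /\<^sub>R real n))
      - (\<Sum>k<m. mv m B (tbar n Tj) k *\<^sub>R ((\<Sum>j<n. Tj j k *\<^sub>R P j - EE j k) /\<^sub>R real n))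
      - (\<Sum>i<n. (\<Sum>k<m. mv m B (Tj i) k *\<^sub>R ((\<Sum>j<n. EE j k) /\<^sub>R real n)) - X i) /\<^sub>R real n"
proof -
  define G where "G k = (\<Sum>j<n. Tj j k *\<^sub>R P j) /\<^sub>R real n" for k
  define D where "D k = (\<Sum>j<n. Tj j k *\<^sub>R P j - EE j k) /\<^sub>R real n" for k
  define A where "A k = (\<Sum>j<n. EE j k) /\<^sub>R real n" for k
  define v where "v = mv m B (tbar n Tj)"
  have "(\<Sum>j<n. vdot m z (Tj j) *\<^sub>R P j) /\<^sub>R real n = (\<Sum>k<m. z k *\<^sub>R G k)"
    by (simp add: G_def sum_vdot_scaleR scaleR_sum_right mult_ac)
  moreover have "(\<Sum>k<m. z k *\<^sub>R G k)
      = (\<Sum>k<m. (z k - v k) *\<^sub>R G k) + (\<Sum>k<m. v k *\<^sub>R D k) + (\<Sum>k<m. v k *\<^sub>R A k)"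
  proof -
    have "G k = D k + A k" for k
      by (simp add: G_def D_def A_def sum_subtractf scaleR_right_diff_distrib)
    then have "z k *\<^sub>R G k = (z k - v k) *\<^sub>R G k + v k *\<^sub>R D k + v k *\<^sub>R A k" for k
      by (metis add.assoc diff_add_cancel scaleR_add_left scaleR_add_right)
    then show ?thesis by (simp add: sum.distrib)
  qed
  moreover have "(\<Sum>k<m. v k *\<^sub>R A k)
      = (\<Sum>i<n. (\<Sum>k<m. mv m B (Tj i) k *\<^sub>R A k) - X i) /\<^sub>R real n + (\<Sum>j<n. X j) /\<^sub>R real n"
    unfolding v_def sum_mv_tbar_scaleR by (simp add: sum_subtractf scaleR_right_diff_distrib)
  ultimately show ?thesis by (simp add: G_def D_def A_def v_def)
qed

lemma norm_el_centre_term_le: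
  fixes P :: "nat \<Rightarrow> 'b::real_normed_vector"
  assumes R: "el_root m n Tj z" and n: "n > 0" and c: "c > 0" and K: "0 \<le> K"
    and regl: "\<And>a. c * (vnorm m a)\<^sup>2 \<le> qform m W a"
    and Su: "\<And>a. qform m (Smat n Tj) a \<le> K * (vnorm m a)\<^sup>2"
    and small: "vnorm m z * tstar m n Tj \<le> 1/2"
  shows "norm (\<Sum>k<m. (z k - mv m (minv m W) (tbar n Tj) k) *\<^sub>R ((\<Sum>j<n. Tj j k *\<^sub>R P j) /\<^sub>R real n))
    \<le> sqrt K * ((opnorm m (\<lambda>k l. Smat n Tj k l - W k l) * vnorm m z
      + 2 * tstar m n Tj * K * (vnorm m z)\<^sup>2) / c) * rms n (\<lambda>j. norm (P j))"
    (is "norm (\<Sum>k<m. ?w k *\<^sub>R _) \<le> sqrt K * (?B / c) * ?s")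
proof -
  have "c * vnorm m ?w \<le> opnorm m (\<lambda>k l. Smat n Tj k l - W k l) * vnorm m z
      + 2 * tstar m n Tj * qform m (Smat n Tj) z"
    by (rule el_root_centre_bound[OF R n c regl small])
  also have "\<dots> \<le> ?B"
    using Su[of z] by (simp add: mult_left_mono tstar_nonneg mult.assoc)
  finally have "vnorm m ?w \<le> ?B / c" using c by (simp add: field_simps)
  then have "sqrt K * vnorm m ?w * ?s \<le> sqrt K * (?B / c) * ?s"
    using K by (intro mult_right_mono mult_left_mono) auto
  with norm_sum_scaleR_mean_le[OF n K Su, of ?w P] show ?thesis by linarith
qed

lemma el_expansion_bound:
  fixes P X :: "nat \<Rightarrow> 'b::real_normed_vector" and EE :: "nat \<Rightarrow> nat \<Rightarrow> 'b"
  assumes c: "0 < c" and cC: "c \<le> C"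
    and regl: "\<And>a. c * (vnorm m a)\<^sup>2 \<le> qform m W a" and regu: "\<And>a. qform m W a \<le> C * (vnorm m a)\<^sup>2"
    and good: "el_good c m W n Tj" and R: "el_root m n Tj z"
  shows "norm ((\<Sum>j<n. P j /\<^sub>R (1 + vdot m z (Tj j))) /\<^sub>R real n - (\<Sum>j<n. P j) /\<^sub>R real n
            + (\<Sum>j<n. X j) /\<^sub>R real n)
     \<le> sqrt (\<Sum>k<m. (norm ((\<Sum>j<n. Tj j k *\<^sub>R P j - EE j k) /\<^sub>R real n))\<^sup>2) * vnorm m (tbar n Tj) / c
       + norm ((\<Sum>i<n. (\<Sum>k<m. mv m (minv m W) (Tj i) k *\<^sub>R ((\<Sum>j<n. EE j k) /\<^sub>R real n)) - X i) /\<^sub>R real n)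
       + 18 * sqrt (C + c / 2) * (c + (C + c / 2)) / c ^ 3 * rms n (\<lambda>j. norm (P j)) *
         (opnorm m (\<lambda>k l. Smat n Tj k l - W k l) * vnorm m (tbar n Tj)
          + tstar m n Tj * (vnorm m (tbar n Tj))\<^sup>2)"
    (is "norm ?lhs \<le> ?b1 * ?tb / c + norm ?b2 + ?\<kappa> * ?s * (?e3 * ?tb + ?ts * ?tb\<^sup>2)")
proof -
  define K where "K = C + c / 2"
  define v where "v = mv m (minv m W) (tbar n Tj)"
  define wG where "wG = (\<Sum>k<m. (z k - v k) *\<^sub>R ((\<Sum>j<n. Tj j k *\<^sub>R P j) /\<^sub>R real n))"
  define vD where "vD = (\<Sum>k<m. v k *\<^sub>R ((\<Sum>j<n. Tj j k *\<^sub>R P j - EE j k) /\<^sub>R real n))"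
  define rem where "rem = (\<Sum>j<n. P j /\<^sub>R (1 + vdot m z (Tj j))) /\<^sub>R real n - (\<Sum>j<n. P j) /\<^sub>R real n
      + (\<Sum>j<n. vdot m z (Tj j) *\<^sub>R P j) /\<^sub>R real n"
  have n: "0 < n" and K: "0 \<le> K" using good c cC by (simp_all add: el_good_def K_def)
  have Su: "qform m (Smat n Tj) a \<le> K * (vnorm m a)\<^sup>2" for a
    using qform_le_perturb[OF regu] good by (simp add: el_good_def K_def)
  note zz = el_good_root_norm_le[OF c good regl R]
  have decomp: "?lhs = rem - wG - vD - ?b2"
    unfolding rem_def wG_def vD_def v_def by (rule el_estimator_decomposition)
  have "norm ?lhs \<le> norm rem + norm wG + norm vD + norm ?b2"
    unfolding decomp using norm_triangle_ineq4[of "rem - wG - vD" ?b2] norm_triangle_ineq4[of "rem - wG" vD]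
      norm_triangle_ineq4[of rem wG]
    by linarith
  moreover have "norm vD \<le> ?b1 * ?tb / c"
  proof -
    have "norm vD \<le> vnorm m v * ?b1" unfolding vD_def by (rule norm_sum_scaleR_le)
    also have "\<dots> \<le> ?tb / c * ?b1"
      unfolding v_def by (intro mult_right_mono vnorm_mv_minv_le[OF c regl]) (simp add: sum_nonneg)
    finally show ?thesis by (simp add: mult.commute)
  qed
  moreover have "norm rem \<le> 2 * (vnorm m z * ?ts) * (sqrt K * vnorm m z) * ?s"
  proof -
    have "norm rem \<le> 2 * (vnorm m z * ?ts) * rms n (\<lambda>j. vdot m z (Tj j)) * ?s"
      unfolding rem_def by (rule norm_weighted_mean_remainder_le[OF n abs_vdot_le_tstar zz(2)])
    also have "\<dots> \<le> 2 * (vnorm m z * ?ts) * (sqrt K * vnorm m z) * ?s"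
      using rms_vdot_le[OF K Su, of z]
      by (intro mult_right_mono mult_left_mono) (auto simp: tstar_nonneg)
    finally show ?thesis .
  qed
  moreover have "norm wG \<le> sqrt K * ((?e3 * vnorm m z + 2 * ?ts * K * (vnorm m z)\<^sup>2) / c) * ?s"
    unfolding wG_def v_def by (rule norm_el_centre_term_le[OF R n c K regl Su zz(2)])
  moreover have "2 * (vnorm m z * ?ts) * (sqrt K * vnorm m z) * ?s
      + sqrt K * ((?e3 * vnorm m z + 2 * ?ts * K * (vnorm m z)\<^sup>2) / c) * ?s
    \<le> ?\<kappa> * ?s * (?e3 * ?tb + ?ts * ?tb\<^sup>2)"
    unfolding K_def
    by (rule el_remainder_arith[OF c K[unfolded K_def] rms_nonneg opnorm_nonneg tstar_nonneg vnorm_nonneg zz(1)])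
  ultimately show ?thesis by linarith
qed

section \<open>Stochastic order symbols\<close>

definition holds_except :: "'a measure \<Rightarrow> real \<Rightarrow> ('a \<Rightarrow> bool) \<Rightarrow> bool" where
  "holds_except M \<delta> P \<longleftrightarrow> (\<exists>A\<in>sets M. measure M A \<le> \<delta> \<and> {\<omega>\<in>space M. \<not> P \<omega>} \<subseteq> A)"

lemma holds_except_conj:
  assumes "holds_except M \<delta> P" and "holds_except M \<delta>' Q"
  shows "holds_except M (\<delta> + \<delta>') (\<lambda>\<omega>. P \<omega> \<and> Q \<omega>)"
proof -
  obtain A B where A: "A \<in> sets M" "measure M A \<le> \<delta>" "{\<omega>\<in>space M. \<not> P \<omega>} \<subseteq> A"
    and B: "B \<in> sets M" "measure M B \<le> \<delta>'" "{\<omega>\<in>space M. \<not> Q \<omega>} \<subseteq> B"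
    using assms unfolding holds_except_def by blast
  have "measure M (A \<union> B) \<le> \<delta> + \<delta>'" using measure_Un_le[OF A(1) B(1)] A(2) B(2) by linarith
  then show ?thesis unfolding holds_except_def using A B by (intro bexI[of _ "A \<union> B"]) auto
qed

lemma holds_except_mono:
  assumes "holds_except M \<delta> P" and "\<delta> \<le> \<delta>'" and "\<And>\<omega>. \<omega> \<in> space M \<Longrightarrow> P \<omega> \<Longrightarrow> Q \<omega>"
  shows "holds_except M \<delta>' Q"
proof -
  obtain A where A: "A \<in> sets M" "measure M A \<le> \<delta>" "{\<omega>\<in>space M. \<not> P \<omega>} \<subseteq> A"
    using assms(1) unfolding holds_except_def by blast
  moreover have "{\<omega>\<in>space M. \<not> Q \<omega>} \<subseteq> {\<omega>\<in>space M. \<not> P \<omega>}" using assms(3) by blast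
  ultimately show ?thesis unfolding holds_except_def using assms(2) by (intro bexI[of _ A]) auto
qed

lemma holds_except_always: "0 \<le> \<delta> \<Longrightarrow> (\<And>\<omega>. \<omega> \<in> space M \<Longrightarrow> P \<omega>) \<Longrightarrow> holds_except M \<delta> P"
  unfolding holds_except_def by (intro bexI[of _ "{}"]) auto

lemma o_pI:
  "(\<And>\<epsilon> \<delta>. 0 < \<epsilon> \<Longrightarrow> 0 < \<delta> \<Longrightarrow>
     eventually (\<lambda>n. holds_except M \<delta> (\<lambda>\<omega>. norm (X n \<omega>) \<le> \<epsilon> * r n)) sequentially) \<Longrightarrow> o_p M X r"
  by (simp add: o_p_def holds_except_def not_le)

lemma o_pD:
  "o_p M X r \<Longrightarrow> 0 < \<epsilon> \<Longrightarrow> 0 < \<delta> \<Longrightarrow>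
     eventually (\<lambda>n. holds_except M \<delta> (\<lambda>\<omega>. norm (X n \<omega>) \<le> \<epsilon> * r n)) sequentially"
  by (simp add: o_p_def holds_except_def not_le)

lemma O_pI:
  "(\<And>\<delta>. 0 < \<delta> \<Longrightarrow> \<exists>K. eventually (\<lambda>n. holds_except M \<delta> (\<lambda>\<omega>. norm (X n \<omega>) \<le> K * r n)) sequentially)
     \<Longrightarrow> O_p M X r"
  by (simp add: O_p_def holds_except_def not_le)

lemma O_pE:
  assumes "O_p M X r" and "0 < \<delta>"
  obtains K where "eventually (\<lambda>n. holds_except M \<delta> (\<lambda>\<omega>. norm (X n \<omega>) \<le> K * r n)) sequentially"
  using assms by (auto simp: O_p_def holds_except_def not_le)

lemma o_p_norm: "o_p M X r \<Longrightarrow> o_p M (\<lambda>n \<omega>. norm (X n \<omega>)) r"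
  by (simp add: o_p_def)

lemma o_p_le:
  assumes "\<And>n \<omega>. norm (X n \<omega>) \<le> norm (Y n \<omega>)" and "o_p M Y r"
  shows "o_p M X r"
proof (rule o_pI)
  fix \<epsilon> \<delta> :: real assume "0 < \<epsilon>" "0 < \<delta>"
  with assms(2) have "eventually (\<lambda>n. holds_except M \<delta> (\<lambda>\<omega>. norm (Y n \<omega>) \<le> \<epsilon> * r n)) sequentially"
    by (rule o_pD)
  then show "eventually (\<lambda>n. holds_except M \<delta> (\<lambda>\<omega>. norm (X n \<omega>) \<le> \<epsilon> * r n)) sequentially"
  proof eventually_elim
    case (elim n)
    show ?case
      by (rule holds_except_mono[OF elim order_refl]) (use assms(1) order_trans in blast)
  qed
qed

lemma o_p_rate_mono:
  assumes "o_p M X r" and "eventually (\<lambda>n. r n \<le> s n) sequentially"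
  shows "o_p M X s"
proof (rule o_pI)
  fix \<epsilon> \<delta> :: real assume \<epsilon>: "0 < \<epsilon>" and "0 < \<delta>"
  with assms(1) have "eventually (\<lambda>n. holds_except M \<delta> (\<lambda>\<omega>. norm (X n \<omega>) \<le> \<epsilon> * r n)) sequentially"
    by (rule o_pD)
  with assms(2) show "eventually (\<lambda>n. holds_except M \<delta> (\<lambda>\<omega>. norm (X n \<omega>) \<le> \<epsilon> * s n)) sequentially"
  proof eventually_elim
    case (elim n)
    show ?case
      by (rule holds_except_mono[OF elim(2) order_refl])
        (use mult_left_mono[OF elim(1), of \<epsilon>] \<epsilon> in linarith)
  qed
qed

lemma o_p_add:
  assumes "o_p M X r" and "o_p M Y r"
  shows "o_p M (\<lambda>n \<omega>. X n \<omega> + Y n \<omega>) r"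
proof (rule o_pI)
  fix \<epsilon> \<delta> :: real assume "0 < \<epsilon>" "0 < \<delta>"
  then have "eventually (\<lambda>n. holds_except M (\<delta>/2) (\<lambda>\<omega>. norm (X n \<omega>) \<le> \<epsilon>/2 * r n)) sequentially"
    and "eventually (\<lambda>n. holds_except M (\<delta>/2) (\<lambda>\<omega>. norm (Y n \<omega>) \<le> \<epsilon>/2 * r n)) sequentially"
    by (intro o_pD[OF assms(1)] o_pD[OF assms(2)]; simp)+
  then show "eventually (\<lambda>n. holds_except M \<delta> (\<lambda>\<omega>. norm (X n \<omega> + Y n \<omega>) \<le> \<epsilon> * r n)) sequentially"
  proof eventually_elim
    case (elim n)
    show ?case
    proof (rule holds_except_mono[OF holds_except_conj[OF elim]])
      fix \<omega> assume "norm (X n \<omega>) \<le> \<epsilon>/2 * r n \<and> norm (Y n \<omega>) \<le> \<epsilon>/2 * r n"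
      then show "norm (X n \<omega> + Y n \<omega>) \<le> \<epsilon> * r n"
        using norm_triangle_ineq[of "X n \<omega>" "Y n \<omega>"] by linarith
    qed simp
  qed
qed

lemma o_p_cmult:
  fixes X :: "nat \<Rightarrow> 'a \<Rightarrow> real"
  assumes "o_p M X r"
  shows "o_p M (\<lambda>n \<omega>. a * X n \<omega>) r"
proof (rule o_pI)
  fix \<epsilon> \<delta> :: real assume \<epsilon>: "0 < \<epsilon>" and "0 < \<delta>"
  define \<epsilon>' where "\<epsilon>' = \<epsilon> / (\<bar>a\<bar> + 1)"
  have \<epsilon>': "0 < \<epsilon>'" "\<bar>a\<bar> * \<epsilon>' \<le> \<epsilon>"
    using \<epsilon> by (simp_all add: \<epsilon>'_def field_simps)
  have "eventually (\<lambda>n. holds_except M \<delta> (\<lambda>\<omega>. norm (X n \<omega>) \<le> \<epsilon>' * r n)) sequentially"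
    using assms \<epsilon>'(1) \<open>0 < \<delta>\<close> by (rule o_pD)
  then show "eventually (\<lambda>n. holds_except M \<delta> (\<lambda>\<omega>. norm (a * X n \<omega>) \<le> \<epsilon> * r n)) sequentially"
  proof eventually_elim
    case (elim n)
    show ?case
    proof (rule holds_except_mono[OF elim order_refl])
      fix \<omega> assume X: "norm (X n \<omega>) \<le> \<epsilon>' * r n"
      then have "0 \<le> \<epsilon>' * r n" using norm_ge_zero[of "X n \<omega>"] by linarith
      then have "0 \<le> r n" using \<epsilon>'(1) by (simp add: zero_le_mult_iff)
      have "norm (a * X n \<omega>) \<le> \<bar>a\<bar> * (\<epsilon>' * r n)" using X by (simp add: abs_mult mult_left_mono)
      also have "\<dots> \<le> \<epsilon> * r n" using mult_right_mono[OF \<epsilon>'(2) \<open>0 \<le> r n\<close>] by (simp add: mult.assoc)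
      finally show "norm (a * X n \<omega>) \<le> \<epsilon> * r n" .
    qed
  qed
qed

lemma o_p_mult_O_p:
  fixes X Y :: "nat \<Rightarrow> 'a \<Rightarrow> real"
  assumes X: "o_p M X r" and Y: "O_p M Y s" and s: "\<And>n. 0 \<le> s n"
  shows "o_p M (\<lambda>n \<omega>. X n \<omega> * Y n \<omega>) (\<lambda>n. r n * s n)"
proof (rule o_pI)
  fix \<epsilon> \<delta> :: real assume \<epsilon>: "0 < \<epsilon>" and \<delta>: "0 < \<delta>"
  obtain K where K: "eventually (\<lambda>n. holds_except M (\<delta>/2) (\<lambda>\<omega>. norm (Y n \<omega>) \<le> K * s n)) sequentially"
    using O_pE[OF Y, of "\<delta>/2"] \<delta> by auto
  define K' where "K' = max K 1"
  have "eventually (\<lambda>n. holds_except M (\<delta>/2) (\<lambda>\<omega>. norm (X n \<omega>) \<le> \<epsilon> / K' * r n)) sequentially"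
    using \<epsilon> \<delta> by (intro o_pD[OF X]) (auto simp: K'_def)
  with K show "eventually (\<lambda>n. holds_except M \<delta> (\<lambda>\<omega>. norm (X n \<omega> * Y n \<omega>) \<le> \<epsilon> * (r n * s n))) sequentially"
  proof eventually_elim
    case (elim n)
    show ?case
    proof (rule holds_except_mono[OF holds_except_conj[OF elim]])
      fix \<omega> assume "norm (Y n \<omega>) \<le> K * s n \<and> norm (X n \<omega>) \<le> \<epsilon> / K' * r n"
      moreover have "K * s n \<le> K' * s n" using s by (intro mult_right_mono) (auto simp: K'_def)
      ultimately have "norm (X n \<omega>) * norm (Y n \<omega>) \<le> (\<epsilon> / K' * r n) * (K' * s n)"
        by (intro mult_mono) auto
      also have "\<dots> = \<epsilon> * (r n * s n)" by (simp add: K'_def)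
      finally show "norm (X n \<omega> * Y n \<omega>) \<le> \<epsilon> * (r n * s n)" by (simp add: abs_mult)
    qed simp
  qed
qed

lemma O_p_mult:
  fixes X Y :: "nat \<Rightarrow> 'a \<Rightarrow> real"
  assumes X: "O_p M X r" and Y: "O_p M Y s"
  shows "O_p M (\<lambda>n \<omega>. X n \<omega> * Y n \<omega>) (\<lambda>n. r n * s n)"
proof (rule O_pI)
  fix \<delta> :: real assume "0 < \<delta>"
  then have \<delta>: "0 < \<delta>/2" by simp
  obtain K where "eventually (\<lambda>n. holds_except M (\<delta>/2) (\<lambda>\<omega>. norm (X n \<omega>) \<le> K * r n)) sequentially"
    using O_pE[OF X \<delta>] by blast
  moreover obtain L where "eventually (\<lambda>n. holds_except M (\<delta>/2) (\<lambda>\<omega>. norm (Y n \<omega>) \<le> L * s n)) sequentially"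
    using O_pE[OF Y \<delta>] by blast
  ultimately have "eventually (\<lambda>n. holds_except M \<delta> (\<lambda>\<omega>. norm (X n \<omega> * Y n \<omega>) \<le> (K * L) * (r n * s n))) sequentially"
  proof eventually_elim
    case (elim n)
    show ?case
    proof (rule holds_except_mono[OF holds_except_conj[OF elim]])
      fix \<omega> assume "norm (X n \<omega>) \<le> K * r n \<and> norm (Y n \<omega>) \<le> L * s n"
      then have "norm (X n \<omega>) * norm (Y n \<omega>) \<le> (K * r n) * (L * s n)"
        using norm_ge_zero[of "X n \<omega>"] norm_ge_zero[of "Y n \<omega>"]
        by (intro mult_mono) linarith+
      then show "norm (X n \<omega> * Y n \<omega>) \<le> (K * L) * (r n * s n)" by (simp add: abs_mult mult_ac)
    qed simp
  qed
  then show "\<exists>K. eventually (\<lambda>n. holds_except M \<delta> (\<lambda>\<omega>. norm (X n \<omega> * Y n \<omega>) \<le> K * (r n * s n))) sequentially"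
    by blast
qed

lemma O_p_sqrt:
  fixes X :: "nat \<Rightarrow> 'a \<Rightarrow> real"
  assumes "O_p M X (\<lambda>_. 1)"
  shows "O_p M (\<lambda>n \<omega>. sqrt (X n \<omega>)) (\<lambda>_. 1)"
proof (rule O_pI)
  fix \<delta> :: real assume "0 < \<delta>"
  then obtain K where "eventually (\<lambda>n. holds_except M \<delta> (\<lambda>\<omega>. norm (X n \<omega>) \<le> K * 1)) sequentially"
    by (rule O_pE[OF assms])
  then have "eventually (\<lambda>n. holds_except M \<delta> (\<lambda>\<omega>. norm (sqrt (X n \<omega>)) \<le> sqrt K * 1)) sequentially"
  proof eventually_elim
    case (elim n)
    show ?case
    proof (rule holds_except_mono[OF elim order_refl])
      fix \<omega> assume "norm (X n \<omega>) \<le> K * 1"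
      then have "sqrt \<bar>X n \<omega>\<bar> \<le> sqrt K * 1" by simp
      then show "norm (sqrt (X n \<omega>)) \<le> sqrt K * 1" by (simp add: real_sqrt_abs')
    qed
  qed
  then show "\<exists>K. eventually (\<lambda>n. holds_except M \<delta> (\<lambda>\<omega>. norm (sqrt (X n \<omega>)) \<le> K * 1)) sequentially"
    by blast
qed

definition whp :: "'a measure \<Rightarrow> (nat \<Rightarrow> 'a \<Rightarrow> bool) \<Rightarrow> bool" where
  "whp M P \<longleftrightarrow> (\<forall>\<delta>>0. eventually (\<lambda>n. holds_except M \<delta> (P n)) sequentially)"

lemma whp_mono:
  assumes "whp M P" and "\<And>n \<omega>. P n \<omega> \<Longrightarrow> Q n \<omega>"
  shows "whp M Q"
  unfolding whp_def
proof (intro allI impI)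
  fix \<delta> :: real assume "0 < \<delta>"
  with assms(1) have "eventually (\<lambda>n. holds_except M \<delta> (P n)) sequentially" by (simp add: whp_def)
  then show "eventually (\<lambda>n. holds_except M \<delta> (Q n)) sequentially"
    by (rule eventually_mono) (use holds_except_mono assms(2) in blast)
qed

lemma whp_conj:
  assumes "whp M P" and "whp M Q"
  shows "whp M (\<lambda>n \<omega>. P n \<omega> \<and> Q n \<omega>)"
  unfolding whp_def
proof (intro allI impI)
  fix \<delta> :: real assume "0 < \<delta>"
  then have "eventually (\<lambda>n. holds_except M (\<delta>/2) (P n)) sequentially"
    and "eventually (\<lambda>n. holds_except M (\<delta>/2) (Q n)) sequentially"
    using assms by (simp_all add: whp_def)
  then show "eventually (\<lambda>n. holds_except M \<delta> (\<lambda>\<omega>. P n \<omega> \<and> Q n \<omega>)) sequentially"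
    by eventually_elim (drule (1) holds_except_conj, simp)
qed

lemma whp_eventually:
  assumes "eventually (\<lambda>n. \<forall>\<omega>. P n \<omega>) sequentially"
  shows "whp M P"
  unfolding whp_def using assms by (auto elim!: eventually_mono intro!: holds_except_always)

lemma whp_o_p:
  assumes "o_p M X (\<lambda>_. 1)" and "0 < \<epsilon>"
  shows "whp M (\<lambda>n \<omega>. norm (X n \<omega>) \<le> \<epsilon>)"
  unfolding whp_def using o_pD[OF assms] by simp

text \<open>Picking for every \<open>n\<close> an almost optimal exceptional set.\<close>

lemma exists_cover_measure_tendsto_0:
  assumes sub: "\<And>n. B n \<subseteq> space M"
    and small: "\<And>\<delta>. \<delta> > 0 \<Longrightarrow> eventually (\<lambda>n. \<exists>A\<in>sets M. measure M A \<le> \<delta> \<and> B n \<subseteq> A) sequentially"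
  shows "\<exists>A. (\<forall>n. A n \<in> sets M \<and> B n \<subseteq> A n) \<and> ((\<lambda>n. measure M (A n)) \<longlonglongrightarrow> 0)"
proof -
  define F where "F n = {measure M A | A. A \<in> sets M \<and> B n \<subseteq> A}" for n
  have F: "F n \<noteq> {}" "bdd_below (F n)" for n
    using sub[of n] unfolding F_def bdd_below_def by (auto intro!: exI[of _ 0])
  have "\<exists>A. A \<in> sets M \<and> B n \<subseteq> A \<and> measure M A < Inf (F n) + 1 / (real n + 1)" for n
    using cInf_lessD[OF F(1)[of n], of "Inf (F n) + 1 / (real n + 1)"] by (auto simp: F_def)
  then obtain A where A: "\<And>n. A n \<in> sets M" "\<And>n. B n \<subseteq> A n"
    "\<And>n. measure M (A n) < Inf (F n) + 1 / (real n + 1)" by metis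
  have "(\<lambda>n. measure M (A n)) \<longlonglongrightarrow> 0"
  proof (rule LIMSEQ_I)
    fix r :: real assume r: "r > 0"
    obtain N1 where N1: "\<And>n. n \<ge> N1 \<Longrightarrow> \<exists>A\<in>sets M. measure M A \<le> r/2 \<and> B n \<subseteq> A"
      using small[of "r/2"] r by (auto simp: eventually_sequentially)
    obtain N2 :: nat where N2: "2 / r < real N2" using reals_Archimedean2 by blast
    show "\<exists>no. \<forall>n\<ge>no. norm (measure M (A n) - 0) < r"
    proof (intro exI allI impI)
      fix n assume n: "n \<ge> max N1 N2"
      then obtain A' where A': "A' \<in> sets M" "measure M A' \<le> r/2" "B n \<subseteq> A'" using N1 by auto
      then have "measure M A' \<in> F n" by (auto simp: F_def)
      then have "Inf (F n) \<le> r/2" using F(2) A'(2) by (meson cInf_lower order_trans)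
      moreover have "1 / (real n + 1) < r / 2"
      proof -
        have "real N2 \<le> real n" using n by simp
        then have "2 / r < real n + 1" using N2 by linarith
        then show ?thesis using r by (simp add: field_simps)
      qed
      ultimately show "norm (measure M (A n) - 0) < r" using A(3)[of n] by simp
    qed
  qed
  then show ?thesis using A by blast
qed

lemma whp_events:
  assumes "prob_space M" and "whp M P"
  shows "\<exists>E. (\<forall>n. E n \<in> sets M) \<and> ((\<lambda>n. measure M (E n)) \<longlonglongrightarrow> 1) \<and> (\<forall>n. \<forall>\<omega>\<in>E n. P n \<omega>)"
proof -
  interpret prob_space M by (rule assms(1))
  obtain A where A: "\<And>n. A n \<in> sets M" "\<And>n. {\<omega>\<in>space M. \<not> P n \<omega>} \<subseteq> A n"
    and lim: "(\<lambda>n. measure M (A n)) \<longlonglongrightarrow> 0"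
    using exists_cover_measure_tendsto_0[of "\<lambda>n. {\<omega>\<in>space M. \<not> P n \<omega>}" M] assms(2)
    unfolding whp_def holds_except_def by auto
  have "(\<lambda>n. measure M (space M - A n)) \<longlonglongrightarrow> 1"
    using tendsto_diff[OF tendsto_const[of 1] lim] by (simp add: prob_compl[OF A(1)])
  moreover have "P n \<omega>" if "\<omega> \<in> space M - A n" for n \<omega> using that A(2)[of n] by blast
  ultimately show ?thesis using A(1) by (intro exI[of _ "\<lambda>n. space M - A n"]) auto
qed

text \<open>By Markov's inequality; only identical distribution of the \<open>Z j\<close> is needed.\<close>

lemma O_p_sample_mean:
  assumes P: "prob_space M" and Z: "\<And>j. Z j \<in> measurable M Q" "\<And>j. distr M Q (Z j) = Q"
    and f: "f \<in> borel_measurable Q" "integrable Q f" "\<And>z. 0 \<le> f z"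
  shows "O_p M (\<lambda>n \<omega>. (\<Sum>j<n. f (Z j \<omega>)) / real n) (\<lambda>_. 1)"
proof (rule O_pI)
  interpret prob_space M by (rule P)
  fix \<delta> :: real assume \<delta>: "0 < \<delta>"
  define I where "I = integral\<^sup>L Q f"
  define K where "K = I / \<delta> + 1"
  have I: "0 \<le> I" using f(3) by (simp add: I_def)
  then have K: "0 < K" using \<delta> by (simp add: K_def add_nonneg_pos)
  have Zf: "integrable M (\<lambda>\<omega>. f (Z j \<omega>))" "integral\<^sup>L M (\<lambda>\<omega>. f (Z j \<omega>)) = I" for j
  proof -
    have "integrable (distr M Q (Z j)) f" using f(2) Z(2) by simp
    then show "integrable M (\<lambda>\<omega>. f (Z j \<omega>))" using f(1) Z(1) by (subst (asm) integrable_distr_eq) auto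
    have "integral\<^sup>L (distr M Q (Z j)) f = integral\<^sup>L M (\<lambda>\<omega>. f (Z j \<omega>))"
      using f(1) Z(1) by (intro integral_distr) auto
    then show "integral\<^sup>L M (\<lambda>\<omega>. f (Z j \<omega>)) = I" using Z(2) by (simp add: I_def)
  qed
  have "holds_except M \<delta> (\<lambda>\<omega>. norm ((\<Sum>j<n. f (Z j \<omega>)) / real n) \<le> K * 1)" for n
  proof (cases "n = 0")
    case False
    define u where "u = (\<lambda>\<omega>. (\<Sum>j<n. f (Z j \<omega>)) / real n)"
    have u: "integrable M u" "integral\<^sup>L M u = I" "\<And>\<omega>. 0 \<le> u \<omega>"
      unfolding u_def using Zf False
      by (auto intro!: integrable_divide integrable_sum divide_nonneg_nonneg sum_nonneg f(3) simp: integral_sum)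
    have "u \<in> borel_measurable M" using u(1) by (rule borel_measurable_integrable)
    then have A: "{\<omega>\<in>space M. K \<le> u \<omega>} \<in> sets M" by measurable
    have "measure M {\<omega>\<in>space M. K \<le> u \<omega>} \<le> I / K"
      using integral_Markov_inequality_measure[OF u(1) A AE_I2[OF u(3)] K] u(2) by simp
    also have "\<dots> \<le> \<delta>" using I K \<delta> by (simp add: K_def field_simps)
    finally show ?thesis
      unfolding holds_except_def using A u(3) by (intro bexI[of _ "{\<omega>\<in>space M. K \<le> u \<omega>}"]) (auto simp: u_def sum_nonneg f(3))
  qed (use \<delta> K in \<open>auto intro: holds_except_always\<close>)
  then show "\<exists>K. eventually (\<lambda>n. holds_except M \<delta> (\<lambda>\<omega>. norm ((\<Sum>j<n. f (Z j \<omega>)) / real n) \<le> K * 1)) sequentially"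
    by (intro exI[of _ K]) simp
qed

lemma O_p_rms_sample:
  fixes psi :: "'z \<Rightarrow> 'b::real_normed_vector"
  assumes P: "prob_space M" and Z: "\<And>j. Z j \<in> measurable M Q" "\<And>j. distr M Q (Z j) = Q"
    and psi: "psi \<in> borel_measurable Q" "integrable Q (\<lambda>z. (norm (psi z))\<^sup>2)"
  shows "O_p M (\<lambda>n \<omega>. rms n (\<lambda>j. norm (psi (Z j \<omega>)))) (\<lambda>_. 1)"
proof -
  have "(\<lambda>z. (norm (psi z))\<^sup>2) \<in> borel_measurable Q" using psi(1) by measurable
  then have "O_p M (\<lambda>n \<omega>. (\<Sum>j<n. (norm (psi (Z j \<omega>)))\<^sup>2) / real n) (\<lambda>_. 1)"
    by (rule O_p_sample_mean[OF P Z _ psi(2)]) simp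
  then show ?thesis unfolding rms_def by (rule O_p_sqrt)
qed

section \<open>Rates and the main result\<close>

lemma el_rates:
  fixes \<mu> \<nu> :: real
  assumes "1 \<le> \<mu> \<and> 1 \<le> \<nu>"
  shows "\<mu> powr (-3/2) * sqrt \<nu> * (sqrt \<mu> / sqrt \<nu>) \<le> 1"
    and "1 / sqrt \<mu> * (sqrt \<mu> / sqrt \<nu>) \<le> 1 / sqrt \<nu>"
    and "1 / \<mu> * (sqrt \<mu> / sqrt \<nu>) * 1 \<le> 1 / sqrt \<nu>"
    and "\<mu> powr (-3/2) * sqrt \<nu> * (sqrt \<mu> / sqrt \<nu> * (sqrt \<mu> / sqrt \<nu>)) * 1 \<le> 1 / sqrt \<nu>"
proof -
  have \<mu>: "1 \<le> \<mu>" and \<nu>: "1 \<le> \<nu>" using assms by simp_all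
  have p: "\<mu> powr (-3/2) = 1 / (\<mu> * sqrt \<mu>)"
    using \<mu> by (simp add: powr_minus_divide powr_add[of \<mu> 1 "1/2", simplified] powr_half_sqrt)
  have s: "sqrt \<mu> * sqrt \<mu> = \<mu>" "sqrt \<nu> * sqrt \<nu> = \<nu>" "1 \<le> sqrt \<mu>" "1 \<le> sqrt \<nu>"
    using \<mu> \<nu> by simp_all
  have "sqrt \<mu> \<le> \<mu>"
    using \<mu> mult_right_mono[OF \<mu>, of \<mu>] by (intro real_le_lsqrt) (auto simp: power2_eq_square)
  show "\<mu> powr (-3/2) * sqrt \<nu> * (sqrt \<mu> / sqrt \<nu>) \<le> 1"
    using s \<open>sqrt \<mu> \<le> \<mu>\<close> unfolding p by (simp add: field_simps)
  show "1 / sqrt \<mu> * (sqrt \<mu> / sqrt \<nu>) \<le> 1 / sqrt \<nu>"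
    using s by simp
  show "1 / \<mu> * (sqrt \<mu> / sqrt \<nu>) * 1 \<le> 1 / sqrt \<nu>"
    using s \<mu> \<open>sqrt \<mu> \<le> \<mu>\<close> by (simp add: field_simps)
  show "\<mu> powr (-3/2) * sqrt \<nu> * (sqrt \<mu> / sqrt \<nu> * (sqrt \<mu> / sqrt \<nu>)) * 1 \<le> 1 / sqrt \<nu>"
    using s \<mu> unfolding p by (simp add: field_simps)
qed

lemma eventually_el_rates:
  assumes "filterlim m at_top sequentially"
  shows "eventually (\<lambda>n. 1 \<le> real (m n) \<and> 1 \<le> real n) sequentially"
proof -
  have "eventually (\<lambda>n. 1 \<le> m n) sequentially" using assms by (simp add: filterlim_at_top)
  with eventually_ge_at_top[of 1] show ?thesis by eventually_elim simp
qed

lemma el_good_whp: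
  fixes ts tb e3 :: "nat \<Rightarrow> 'a \<Rightarrow> real"
  assumes m: "filterlim m at_top sequentially" and c: "0 < c"
    and ts: "o_p M ts (\<lambda>n. real (m n) powr (-3/2) * sqrt (real n))"
    and tb: "O_p M tb (\<lambda>n. sqrt (real (m n)) / sqrt (real n))"
    and e3: "o_p M e3 (\<lambda>n. 1 / real (m n))"
  shows "whp M (\<lambda>n \<omega>. 0 < m n \<and> 0 < n \<and> e3 n \<omega> \<le> c / 2 \<and> tb n \<omega> * ts n \<omega> \<le> c / 13)"
proof -
  note rates = eventually_el_rates[OF m]
  have rate_nonneg: "0 \<le> sqrt (real (m n)) / sqrt (real n)" for n by simp
  have "whp M (\<lambda>n \<omega>. 0 < m n \<and> 0 < n)"
    by (rule whp_eventually) (use rates in \<open>auto elim!: eventually_mono\<close>)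
  moreover have "o_p M e3 (\<lambda>_. 1)"
    by (rule o_p_rate_mono[OF e3]) (use rates in \<open>auto elim!: eventually_mono\<close>)
  then have "whp M (\<lambda>n \<omega>. norm (e3 n \<omega>) \<le> c / 2)" using c by (intro whp_o_p) auto
  moreover have "o_p M (\<lambda>n \<omega>. ts n \<omega> * tb n \<omega>) (\<lambda>_. 1)"
    by (rule o_p_rate_mono[OF o_p_mult_O_p[OF ts tb rate_nonneg]])
      (rule eventually_mono[OF rates], erule el_rates)
  then have "whp M (\<lambda>n \<omega>. norm (ts n \<omega> * tb n \<omega>) \<le> c / 13)" using c by (intro whp_o_p) auto
  ultimately have "whp M (\<lambda>n \<omega>. (0 < m n \<and> 0 < n) \<and> norm (e3 n \<omega>) \<le> c / 2 \<and>
      norm (ts n \<omega> * tb n \<omega>) \<le> c / 13)"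
    by (rule whp_conj[OF _ whp_conj])
  then show ?thesis
    by (rule whp_mono) (auto simp: mult.commute abs_le_iff)
qed

lemma o_p_el_remainder:
  fixes ts tb e3 b1 s :: "nat \<Rightarrow> 'a \<Rightarrow> real" and b2 :: "nat \<Rightarrow> 'a \<Rightarrow> 'c::real_normed_vector"
  assumes m: "filterlim m at_top sequentially"
    and ts: "o_p M ts (\<lambda>n. real (m n) powr (-3/2) * sqrt (real n))"
    and tb: "O_p M tb (\<lambda>n. sqrt (real (m n)) / sqrt (real n))"
    and e3: "o_p M e3 (\<lambda>n. 1 / real (m n))"
    and b1: "o_p M b1 (\<lambda>n. 1 / sqrt (real (m n)))"
    and b2: "o_p M b2 (\<lambda>n. 1 / sqrt (real n))"
    and s: "O_p M s (\<lambda>_. 1)"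
  shows "o_p M (\<lambda>n \<omega>. b1 n \<omega> * tb n \<omega> / c + norm (b2 n \<omega>)
      + \<kappa> * s n \<omega> * (e3 n \<omega> * tb n \<omega> + ts n \<omega> * (tb n \<omega>)\<^sup>2)) (\<lambda>n. 1 / sqrt (real n))"
proof -
  note rates = eventually_el_rates[OF m]
  have rate_nonneg: "0 \<le> sqrt (real (m n)) / sqrt (real n)" "0 \<le> (1::real)"
    "0 \<le> sqrt (real (m n)) / sqrt (real n) * (sqrt (real (m n)) / sqrt (real n))" for n
    by simp_all
  have T1: "o_p M (\<lambda>n \<omega>. b1 n \<omega> * tb n \<omega>) (\<lambda>n. 1 / sqrt (real n))"
    by (rule o_p_rate_mono[OF o_p_mult_O_p[OF b1 tb rate_nonneg(1)]])
      (rule eventually_mono[OF rates], erule el_rates)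
  have T3: "o_p M (\<lambda>n \<omega>. e3 n \<omega> * tb n \<omega> * s n \<omega>) (\<lambda>n. 1 / sqrt (real n))"
    by (rule o_p_rate_mono[OF o_p_mult_O_p[OF o_p_mult_O_p[OF e3 tb rate_nonneg(1)] s rate_nonneg(2)]])
      (rule eventually_mono[OF rates], erule el_rates)
  have T4: "o_p M (\<lambda>n \<omega>. ts n \<omega> * (tb n \<omega> * tb n \<omega>) * s n \<omega>) (\<lambda>n. 1 / sqrt (real n))"
    by (rule o_p_rate_mono[OF o_p_mult_O_p[OF o_p_mult_O_p[OF ts O_p_mult[OF tb tb] rate_nonneg(3)] s rate_nonneg(2)]])
      (rule eventually_mono[OF rates], erule el_rates)
  have "o_p M (\<lambda>n \<omega>. 1 / c * (b1 n \<omega> * tb n \<omega>) + norm (b2 n \<omega>)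
      + \<kappa> * (e3 n \<omega> * tb n \<omega> * s n \<omega> + ts n \<omega> * (tb n \<omega> * tb n \<omega>) * s n \<omega>)) (\<lambda>n. 1 / sqrt (real n))"
    using o_p_add[OF o_p_add[OF o_p_cmult[OF T1] o_p_norm[OF b2]] o_p_cmult[OF o_p_add[OF T3 T4]]] .
  then show ?thesis
    by (rule o_p_le[rotated]) (simp add: power2_eq_square algebra_simps)
qed

theorem theorem5:
  fixes M :: "'a measure" and Q :: "'z measure"
    and Z :: "nat \<Rightarrow> 'a \<Rightarrow> 'z"
    and psi chi :: "'z \<Rightarrow> 'b::euclidean_space"
    and m :: "nat \<Rightarrow> nat"
    and T :: "nat \<Rightarrow> nat \<Rightarrow> 'a \<Rightarrow> nat \<Rightarrow> real"
    and W :: "nat \<Rightarrow> nat \<Rightarrow> nat \<Rightarrow> real"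
  assumes P: "prob_space M"
    and Zmeas: "\<forall>j. Z j \<in> measurable M Q"
    and Zdist: "\<forall>j. distr M Q (Z j) = Q"
    and Zindep: "prob_space.indep_vars M (\<lambda>_. Q) Z UNIV"
    and psi_meas: "psi \<in> borel_measurable Q"
    and psi_sq: "integrable Q (\<lambda>z. (norm (psi z))\<^sup>2)"
    and m_lim: "filterlim m at_top sequentially"
    and Tmeas: "\<forall>n. \<forall>j<n. \<forall>k<m n. (\<lambda>\<omega>. T n j \<omega> k) \<in> borel_measurable M"
    and Tint: "\<forall>n. \<forall>j<n. \<forall>k<m n. integrable M (\<lambda>\<omega>. T n j \<omega> k *\<^sub>R psi (Z j \<omega>))"
    and A1: "o_p M (\<lambda>n \<omega>. Max (insert 0 ((\<lambda>j. vnorm (m n) (T n j \<omega>)) ` {..<n})))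
               (\<lambda>n. real (m n) powr (-3/2) * sqrt (real n))"
    and A2: "O_p M (\<lambda>n \<omega>. vnorm (m n) (\<lambda>k. (\<Sum>j<n. T n j \<omega> k) / real n))
               (\<lambda>n. sqrt (real (m n)) / sqrt (real n))"
    and A3_reg: "regular_disp m W"
    and A3: "o_p M (\<lambda>n \<omega>. opnorm (m n)
                  (\<lambda>k l. (\<Sum>j<n. T n j \<omega> k * T n j \<omega> l) / real n - W n k l))
               (\<lambda>n. 1 / real (m n))"
    and B1: "o_p M (\<lambda>n \<omega>. sqrt (\<Sum>k<m n. (norm ((\<Sum>j<n. T n j \<omega> k *\<^sub>R psi (Z j \<omega>)
                   - integral\<^sup>L M (\<lambda>\<omega>'. T n j \<omega>' k *\<^sub>R psi (Z j \<omega>'))) /\<^sub>R real n))\<^sup>2))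
               (\<lambda>n. 1 / sqrt (real (m n)))"
    and chi_meas: "chi \<in> borel_measurable Q"
    and chi_int: "integrable Q chi"
    and chi_mean: "integral\<^sup>L Q chi = 0"
    and chi_sq: "integrable Q (\<lambda>z. (norm (chi z))\<^sup>2)"
    and B2: "o_p M (\<lambda>n \<omega>. (\<Sum>i<n. (\<Sum>k<m n. mv (m n) (minv (m n) (W n)) (T n i \<omega>) k *\<^sub>R
                   ((\<Sum>j<n. integral\<^sup>L M (\<lambda>\<omega>'. T n j \<omega>' k *\<^sub>R psi (Z j \<omega>'))) /\<^sub>R real n))
                   - chi (Z i \<omega>)) /\<^sub>R real n)
               (\<lambda>n. 1 / sqrt (real n))"
  shows "\<exists>E. (\<forall>n. E n \<in> sets M) \<and> ((\<lambda>n. measure M (E n)) \<longlonglongrightarrow> 1) \<and>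
     (\<forall>n. \<forall>\<omega>\<in>E n. \<exists>!zeta. el_root (m n) n (\<lambda>j. T n j \<omega>) zeta) \<and>
     o_p M (\<lambda>n \<omega>. if \<omega> \<in> E n then
         (let zeta = (THE zeta. el_root (m n) n (\<lambda>j. T n j \<omega>) zeta) in
           (\<Sum>j<n. psi (Z j \<omega>) /\<^sub>R (1 + vdot (m n) zeta (T n j \<omega>))) /\<^sub>R real n
           - (\<Sum>j<n. psi (Z j \<omega>)) /\<^sub>R real n + (\<Sum>j<n. chi (Z j \<omega>)) /\<^sub>R real n)
       else 0) (\<lambda>n. 1 / sqrt (real n))"
proof -
  obtain c C where c: "0 < c" and cC: "c \<le> C"
    and regl: "\<And>n a. c * (vnorm (m n) a)\<^sup>2 \<le> qform (m n) (W n) a"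
    and regu: "\<And>n a. qform (m n) (W n) a \<le> C * (vnorm (m n) a)\<^sup>2"
    using regular_dispE[OF A3_reg] by blast
  have ts: "o_p M (\<lambda>n \<omega>. tstar (m n) n (\<lambda>j. T n j \<omega>)) (\<lambda>n. real (m n) powr (-3/2) * sqrt (real n))"
    unfolding tstar_def by (rule A1)
  have tb: "O_p M (\<lambda>n \<omega>. vnorm (m n) (tbar n (\<lambda>j. T n j \<omega>))) (\<lambda>n. sqrt (real (m n)) / sqrt (real n))"
    unfolding tbar_def by (rule A2)
  have e3: "o_p M (\<lambda>n \<omega>. opnorm (m n) (\<lambda>k l. Smat n (\<lambda>j. T n j \<omega>) k l - W n k l)) (\<lambda>n. 1 / real (m n))"
    unfolding Smat_def by (rule A3)
  have good_whp: "whp M (\<lambda>n \<omega>. el_good c (m n) (W n) n (\<lambda>j. T n j \<omega>))"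
    unfolding el_good_def by (rule el_good_whp[OF m_lim c ts tb e3])
  obtain E where E: "\<forall>n. E n \<in> sets M" "(\<lambda>n. measure M (E n)) \<longlonglongrightarrow> 1"
    and good: "\<forall>n. \<forall>\<omega>\<in>E n. el_good c (m n) (W n) n (\<lambda>j. T n j \<omega>)"
    using whp_events[OF P good_whp] by blast
  have s: "O_p M (\<lambda>n \<omega>. rms n (\<lambda>j. norm (psi (Z j \<omega>)))) (\<lambda>_. 1)"
    by (rule O_p_rms_sample[OF P Zmeas[rule_format] Zdist[rule_format] psi_meas psi_sq])
  have "o_p M (\<lambda>n \<omega>. if \<omega> \<in> E n then
         (let zeta = (THE zeta. el_root (m n) n (\<lambda>j. T n j \<omega>) zeta) in
           (\<Sum>j<n. psi (Z j \<omega>) /\<^sub>R (1 + vdot (m n) zeta (T n j \<omega>))) /\<^sub>R real n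
           - (\<Sum>j<n. psi (Z j \<omega>)) /\<^sub>R real n + (\<Sum>j<n. chi (Z j \<omega>)) /\<^sub>R real n)
       else 0) (\<lambda>n. 1 / sqrt (real n))"
  proof (rule o_p_le[OF _ o_p_el_remainder[OF m_lim ts tb e3 B1 B2 s, where c = c
      and \<kappa> = "18 * sqrt (C + c / 2) * (c + (C + c / 2)) / c ^ 3"]],
      goal_cases)
    case (1 n \<omega>)
    show ?case
    proof (cases "\<omega> \<in> E n")
      case True
      note good_n = good[rule_format, OF True]
      have root: "el_root (m n) n (\<lambda>j. T n j \<omega>) (THE zeta. el_root (m n) n (\<lambda>j. T n j \<omega>) zeta)"
        using el_good_ex1_root[OF c good_n regl] by (rule theI')
      note bound = el_expansion_bound[OF c cC regl regu good_n root, where P = "\<lambda>j. psi (Z j \<omega>)"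
          and X = "\<lambda>j. chi (Z j \<omega>)" and EE = "\<lambda>j k. integral\<^sup>L M (\<lambda>\<omega>'. T n j \<omega>' k *\<^sub>R psi (Z j \<omega>'))"]
      show ?thesis
        using True order_trans[OF bound abs_ge_self] by (simp only: if_P Let_def real_norm_def)
    qed simp
  qed
  then show ?thesis
    using E good el_good_ex1_root[OF c _ regl] by (intro exI[of _ E]) auto
qed

end
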